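(* Let $X$ be a stacked simplicial complex of dimension $d$, let $\mathcal F$ be any partition of the set of facets of $X$, and let $\sim'_V$ be the relation on vertices associated with $\mathcal F$. Fix a codimension one face $c$, with associated $X_m$ and $V_m$. Let $m\ge1$, $v\in V_m\setminus V_{m-1}$, and let $u,w$ be distinct vertices in $V_m$ such that $v\sim'_V u$ and $v\sim'_V w$. Then $u\sim'_V w$.
   Context: A simplicial complex $X$ on a finite vertex set $V$ is a family of subsets (faces) of $V$ closed under taking subsets, every element of $V$ lying in some face; facets are inclusion-maximal faces. $X$ is pure of dimension $d$ if every facet has $d+1$ elements; a codimension one face is a face with $d$ elements. $X$ is stacked if it is pure of some dimension $d$ and its facets can be ordered $F_0,\dots,F_k$ such that for each $p\ge1$, $F_p$ contains exactly one vertex $v_p$ not in $F_0\cup\dots\cup F_{p-1}$, and $F_p\setminus\{v_p\}\subseteq F_j$ for some $j<p$. A walk is a sequence of facets $f_1,\dots,f_p$ ($p\ge1$) with each $f_i\cap f_{i+1}$ of exactly $d$ elements; a path is a walk in which the faces $f_i\cap f_{i+1}$, $1\le i<p$, are pairwise distinct. For faces $h,k$ with $h\cup k$ not contained in any codimension one face, a path between $h$ and $k$, written $h\,|\,f_1,\dots,f_p\,|\,k$, is a path with $h\subseteq f_1$, $k\subseteq f_p$ and, if $p\ge2$, $h\not\subseteq f_1\cap f_2$, $k\not\subseteq f_p\cap f_{p-1}$; in a stacked complex it exists and is unique. Relation $\sim'_V$: for distinct vertices $v,w$ not lying in a common facet, let $v\,|\,f_1,\dots,f_p\,|\,w$ be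 the unique path between $\{v\}$ and $\{w\}$; then $v\sim'_V w$ iff $f_1$ and $f_p$ lie in the same part $Q$ of $\mathcal F$ and none of $f_2,\dots,f_{p-1}$ lies in $Q$. (Vertices lying in a common facet are never related by $\sim'_V$.) Distance neighbourhoods: the distance from a facet $f$ to $c$ is the minimal $r\ge1$ such that there is a walk $f_1,\dots,f_r$ with $f_1=f$ and $c\subseteq f_r$; $X_m$ is the set of facets at distance $\le m$ from $c$; $V_0$ is the vertex set of $c$ and, for $m\ge1$, $V_m$ is the set of vertices of facets in $X_m$. *)

theory Defs
  imports Main "HOL-Library.Disjoint_Sets"
begin

definition simplicial_complex :: "'a set \<Rightarrow> 'a set set \<Rightarrow> bool" where
  "simplicial_complex V X \<longleftrightarrow> finite V \<and> (\<forall>F\<in>X. F \<subseteq> V)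
     \<and> (\<forall>F\<in>X. \<forall>G. G \<subseteq> F \<longrightarrow> G \<in> X) \<and> (\<forall>v\<in>V. \<exists>F\<in>X. v \<in> F)"

definition facets :: "'a set set \<Rightarrow> 'a set set" where
  "facets X = {F \<in> X. \<forall>G\<in>X. F \<subseteq> G \<longrightarrow> G = F}"

definition pure :: "'a set set \<Rightarrow> nat \<Rightarrow> bool" where
  "pure X d \<longleftrightarrow> (\<forall>F\<in>facets X. card F = d + 1)"

definition stacked :: "'a set set \<Rightarrow> nat \<Rightarrow> bool" where
  "stacked X d \<longleftrightarrow> pure X d \<and>
     (\<exists>fs. fs \<noteq> [] \<and> distinct fs \<and> set fs = facets X \<and>
        (\<forall>p. 1 \<le> p \<and> p < length fs \<longrightarrow>
           (\<exists>v. fs ! p - (\<Union>j<p. fs ! j) = {v} \<and>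
                (\<exists>j<p. fs ! p - {v} \<subseteq> fs ! j))))"

definition walk :: "'a set set \<Rightarrow> nat \<Rightarrow> 'a set list \<Rightarrow> bool" where
  "walk X d fs \<longleftrightarrow> fs \<noteq> [] \<and> set fs \<subseteq> facets X \<and>
     (\<forall>i. i + 1 < length fs \<longrightarrow> card (fs ! i \<inter> fs ! (i + 1)) = d)"

definition path :: "'a set set \<Rightarrow> nat \<Rightarrow> 'a set list \<Rightarrow> bool" where
  "path X d fs \<longleftrightarrow> walk X d fs \<and>
     distinct (map (\<lambda>i. fs ! i \<inter> fs ! (i + 1)) [0..<length fs - 1])"

definition path_between :: "'a set set \<Rightarrow> nat \<Rightarrow> 'a set \<Rightarrow> 'a set list \<Rightarrow> 'a set \<Rightarrow> bool" where
  "path_between X d h fs k \<longleftrightarrow> path X d fs \<and> h \<subseteq> hd fs \<and> k \<subseteq> last fs \<and>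
     (2 \<le> length fs \<longrightarrow>
        \<not> h \<subseteq> fs ! 0 \<inter> fs ! 1 \<and>
        \<not> k \<subseteq> fs ! (length fs - 1) \<inter> fs ! (length fs - 2))"

definition rel_V :: "'a set set \<Rightarrow> nat \<Rightarrow> 'a set set set \<Rightarrow> 'a \<Rightarrow> 'a \<Rightarrow> bool" where
  "rel_V X d \<F> v w \<longleftrightarrow> v \<noteq> w \<and> v \<in> \<Union>X \<and> w \<in> \<Union>X \<and>
     \<not> (\<exists>F\<in>facets X. v \<in> F \<and> w \<in> F) \<and>
     (let fs = (THE fs. path_between X d {v} fs {w}) in
       \<exists>Q\<in>\<F>. hd fs \<in> Q \<and> last fs \<in> Q \<and>
         (\<forall>i. 1 \<le> i \<and> i < length fs - 1 \<longrightarrow> fs ! i \<notin> Q))"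

definition reaches :: "'a set set \<Rightarrow> nat \<Rightarrow> 'a set \<Rightarrow> 'a set \<Rightarrow> nat \<Rightarrow> bool" where
  "reaches X d c f r \<longleftrightarrow> 1 \<le> r \<and>
     (\<exists>fs. walk X d fs \<and> length fs = r \<and> hd fs = f \<and> c \<subseteq> last fs)"

definition facet_dist :: "'a set set \<Rightarrow> nat \<Rightarrow> 'a set \<Rightarrow> 'a set \<Rightarrow> nat" where
  "facet_dist X d c f = (LEAST r. reaches X d c f r)"

definition Xm :: "'a set set \<Rightarrow> nat \<Rightarrow> 'a set \<Rightarrow> nat \<Rightarrow> 'a set set" where
  "Xm X d c m = {f \<in> facets X. (\<exists>r. reaches X d c f r) \<and> facet_dist X d c f \<le> m}"

definition Vm :: "'a set set \<Rightarrow> nat \<Rightarrow> 'a set \<Rightarrow> nat \<Rightarrow> 'a set" where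
  "Vm X d c m = (if m = 0 then c else \<Union>(Xm X d c m))"

end

theory Submission
  imports Defs "HOL-Library.Sublist"
begin

text \<open>Facets and ridges of a stacked complex form a tree, in which walks of facets are the
  walks alternating between facets and ridges; the path between two vertices is the
  unique shortest tree path (a bridge) between their stars, which are subtrees, and the
  distance of a facet to \<open>c\<close> counts the facets on its tree geodesic to \<open>c\<close>.
  For \<open>v \<in> V\<^sub>m - V\<^sub>m\<^sub>-\<^sub>1\<close>, the paths from \<open>v\<close> to \<open>u\<close> and to \<open>w\<close> in \<open>V\<^sub>m\<close> must leave the star of
  \<open>v\<close> along its geodesic to \<open>c\<close>, since otherwise a facet through \<open>u\<close> or \<open>w\<close> would be too
  far from \<open>c\<close>; so they share their first facet and ridge. Their last facets lie in the part
  \<open>Q\<close> containing the first one, which their interiors avoid, so neither path is a prefix of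
  the other; splicing them where they branch gives the path from \<open>u\<close> to \<open>w\<close>, and its
  interior, made of interior facets of the two paths, avoids \<open>Q\<close>.\<close>

fun no_backtrack :: "'n list \<Rightarrow> bool" where
  "no_backtrack (x # y # z # r) \<longleftrightarrow> x \<noteq> z \<and> no_backtrack (y # z # r)"
| "no_backtrack _ \<longleftrightarrow> True"

lemma no_backtrack_tl: "no_backtrack xs \<Longrightarrow> no_backtrack (tl xs)"
  by (induction xs rule: no_backtrack.induct) auto

lemma no_backtrack_appendD1: "no_backtrack (xs @ ys) \<Longrightarrow> no_backtrack xs"
  by (induction xs rule: no_backtrack.induct) (auto simp: Cons_eq_append_conv)

lemma no_backtrack_appendD2: "no_backtrack (xs @ ys) \<Longrightarrow> no_backtrack ys"
  by (induction xs) (auto dest: no_backtrack_tl[of "_ # _"])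

lemma no_backtrack_snoc:
  "no_backtrack (xs @ [a, b, c]) \<longleftrightarrow> no_backtrack (xs @ [a, b]) \<and> a \<noteq> c"
  by (induction xs rule: no_backtrack.induct) auto

lemma no_backtrack_rev: "no_backtrack xs \<Longrightarrow> no_backtrack (rev xs)"
proof (induction xs rule: no_backtrack.induct)
  case (1 x y z r)
  then have "no_backtrack (rev r @ [z, y])" by auto
  with 1 show ?case by (auto simp: no_backtrack_snoc)
qed auto

lemma no_backtrack_append:
  assumes "no_backtrack (xs @ [y])" "no_backtrack (y # ys)"
    and "xs \<noteq> [] \<Longrightarrow> ys \<noteq> [] \<Longrightarrow> last xs \<noteq> hd ys"
  shows "no_backtrack (xs @ y # ys)"
  using assms
proof (induction xs rule: no_backtrack.induct)
  case (1 x y' z r)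
  then show ?case by (cases r) (auto simp: Cons_eq_append_conv)
next
  case ("2_2" x)
  then show ?case by (cases ys) auto
next
  case ("2_3" x y')
  then show ?case by (cases ys) auto
qed simp

lemma no_backtrack_conv_nth:
  "no_backtrack P \<longleftrightarrow> (\<forall>i. i + 2 < length P \<longrightarrow> P ! i \<noteq> P ! (i + 2))"
proof (induction P rule: no_backtrack.induct)
  case (1 x y z r)
  let ?P = "x # y # z # r"
  show ?case
  proof
    assume "no_backtrack ?P"
    show "\<forall>i. i + 2 < length ?P \<longrightarrow> ?P ! i \<noteq> ?P ! (i + 2)"
    proof (intro allI impI)
      fix i assume "i + 2 < length ?P"
      then show "?P ! i \<noteq> ?P ! (i + 2)" using \<open>no_backtrack ?P\<close> 1 by (cases i) auto
    qed
  next
    assume a: "\<forall>i. i + 2 < length ?P \<longrightarrow> ?P ! i \<noteq> ?P ! (i + 2)"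
    have "x \<noteq> z" using a[rule_format, of 0] by simp
    moreover have "\<forall>i. i + 2 < length (y # z # r) \<longrightarrow> (y # z # r) ! i \<noteq> (y # z # r) ! (i + 2)"
      using a by (auto dest: spec[of _ "Suc _"])
    ultimately show "no_backtrack ?P" using 1 by simp
  qed
qed (auto simp: less_Suc_eq)

lemma tl_rev: "tl (rev xs) = rev (butlast xs)"
  by (metis butlast_rev rev_rev_ident)

lemma last_append_tl: "last xs = hd ys \<Longrightarrow> ys \<noteq> [] \<Longrightarrow> last (xs @ tl ys) = last ys"
  by (cases ys) (auto simp: last_append)

lemma in_set_tl_conv_nth: "x \<in> set (tl P) \<longleftrightarrow> (\<exists>j. 1 \<le> j \<and> j < length P \<and> P ! j = x)"
proof (cases P)
  case (Cons a r)
  show ?thesis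
  proof
    assume "x \<in> set (tl P)"
    then obtain i where "i < length r" "r ! i = x" using Cons by (auto simp: in_set_conv_nth)
    then show "\<exists>j. 1 \<le> j \<and> j < length P \<and> P ! j = x"
      using Cons by (intro exI[of _ "Suc i"]) auto
  next
    assume "\<exists>j. 1 \<le> j \<and> j < length P \<and> P ! j = x"
    then obtain i where "Suc i < length P" "P ! Suc i = x"
      by (metis Suc_pred less_le_trans zero_less_one)
    then show "x \<in> set (tl P)" using Cons by (auto simp: in_set_conv_nth)
  qed
qed simp

lemma in_set_butlast_conv_nth: "x \<in> set (butlast P) \<longleftrightarrow> (\<exists>j. j + 1 < length P \<and> P ! j = x)"
proof
  assume "x \<in> set (butlast P)"
  then obtain i where "i < length P - 1" "butlast P ! i = x" by (auto simp: in_set_conv_nth)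
  then show "\<exists>j. j + 1 < length P \<and> P ! j = x" by (intro exI[of _ i]) (simp add: nth_butlast)
next
  assume "\<exists>j. j + 1 < length P \<and> P ! j = x"
  then obtain j where "j + 1 < length P" "P ! j = x" by blast
  then show "x \<in> set (butlast P)" by (auto simp: in_set_conv_nth nth_butlast intro!: exI[of _ j])
qed

lemma in_set_butlast_tl_conv_nth:
  "x \<in> set (butlast (tl P)) \<longleftrightarrow> (\<exists>j. 1 \<le> j \<and> j + 1 < length P \<and> P ! j = x)"
proof
  assume "x \<in> set (butlast (tl P))"
  then obtain j where "j + 1 < length (tl P)" "tl P ! j = x"
    unfolding in_set_butlast_conv_nth by blast
  then show "\<exists>j. 1 \<le> j \<and> j + 1 < length P \<and> P ! j = x"
    by (intro exI[of _ "Suc j"]) (auto simp: nth_tl)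
next
  assume "\<exists>j. 1 \<le> j \<and> j + 1 < length P \<and> P ! j = x"
  then obtain i where "Suc i + 1 < length P" "P ! Suc i = x"
    by (metis Suc_pred less_le_trans zero_less_one)
  then show "x \<in> set (butlast (tl P))"
    unfolding in_set_butlast_conv_nth by (intro exI[of _ i]) (auto simp: nth_tl)
qed

lemma split_last2: "2 \<le> length P \<Longrightarrow> \<exists>xs y z. P = xs @ [y, z]"
proof -
  assume "2 \<le> length P"
  then obtain xs y z where "rev P = z # y # xs"
    by (metis Suc_le_length_iff numeral_2_eq_2 length_rev)
  then have "P = rev xs @ [y, z]" by (metis rev_rev_ident rev.simps append.simps append_assoc)
  then show ?thesis by blast
qed

lemma split_first2: "2 \<le> length P \<Longrightarrow> \<exists>a b r. P = a # b # r"
  by (metis Suc_le_length_iff numeral_2_eq_2)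

lemma rev_nth_1: "2 \<le> length P \<Longrightarrow> rev P ! 1 = P ! (length P - 2)"
  by (simp add: rev_nth numeral_2_eq_2)

lemma nth_one_append_Cons_indep: "zs \<noteq> [] \<Longrightarrow> (zs @ a # t) ! 1 = (zs @ a # t') ! 1"
  by (cases zs) (auto simp: nth_append)

lemma strict_prefix_last_in_interior:
  assumes "strict_prefix xs ys" "2 \<le> length xs"
  shows "last xs \<in> set (butlast (tl ys))"
proof -
  obtain zs where ys: "ys = xs @ zs" "zs \<noteq> []"
    using assms(1) by (auto simp: strict_prefix_def prefix_def)
  obtain a b r where "xs = a # b # r" using assms(2) by (metis Suc_le_length_iff numeral_2_eq_2)
  then show ?thesis using ys by (auto simp: butlast_append)
qed

lemma parallel_decomp_beyond_take:
  assumes "xs \<parallel> ys" "take n xs = take n ys"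
  obtains as x xs' y ys' where "x \<noteq> y" "xs = as @ x # xs'" "ys = as @ y # ys'" "n \<le> length as"
proof -
  obtain as x xs' y ys' where dec: "x \<noteq> y" "xs = as @ x # xs'" "ys = as @ y # ys'"
    using parallel_decomp[OF assms(1)] by blast
  have "n \<le> length as"
  proof (rule ccontr)
    assume "\<not> n \<le> length as"
    then have "length as < n" by simp
    have "x = xs ! length as" using dec(2) by simp
    also have "\<dots> = take n xs ! length as" using \<open>length as < n\<close> by simp
    also have "\<dots> = ys ! length as" using assms(2) \<open>length as < n\<close> by simp
    also have "\<dots> = y" using dec(3) by simp
    finally show False using dec(1) by simp
  qed
  then show ?thesis by (rule that[OF dec])
qed

lemma set_butlast_tl_append_Cons:
  "zs \<noteq> [] \<Longrightarrow> set (butlast (tl (zs @ a # t))) \<subseteq> set (tl zs) \<union> insert a (set (butlast t))"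
  by (cases zs; cases t) (auto simp: butlast_append)

lemma branch_join_interior:
  assumes "2 \<le> length as"
  shows "set (butlast (tl (rev (x # xs) @ last as # y # ys)))
    \<subseteq> set (butlast (tl (as @ x # xs))) \<union> set (butlast (tl (as @ y # ys)))"
proof -
  obtain a as' where as: "as = a # as'" "as' \<noteq> []" using assms by (cases as) (auto simp: Suc_le_eq)
  have "set (tl (rev (x # xs))) = set (butlast (x # xs))" by (simp only: tl_rev set_rev)
  then have "set (butlast (tl (rev (x # xs) @ last as # y # ys)))
      \<subseteq> set (butlast (x # xs)) \<union> insert (last as) (set (butlast (y # ys)))"
    using set_butlast_tl_append_Cons[of "rev (x # xs)" "last as" "y # ys"] by simp
  moreover have "last as \<in> set as'" using as by simp
  moreover have "set (butlast (tl (as @ z # zs))) = set as' \<union> set (butlast (z # zs))" for z zs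
    using as by (simp add: butlast_append)
  ultimately show ?thesis by blast
qed

lemma take_2_conv: "2 \<le> length P \<Longrightarrow> take 2 P = [hd P, P ! 1]"
  by (cases P; cases "tl P") (auto simp: numeral_2_eq_2)

section \<open>Geodesics in rooted trees\<close>

locale rooted_tree =
  fixes N :: "'n set" and root :: 'n and parent :: "'n \<Rightarrow> 'n" and rank :: "'n \<Rightarrow> nat"
  assumes root_in: "root \<in> N"
    and parent_in: "\<And>x. x \<in> N \<Longrightarrow> x \<noteq> root \<Longrightarrow> parent x \<in> N"
    and rank_parent_less: "\<And>x. x \<in> N \<Longrightarrow> x \<noteq> root \<Longrightarrow> rank (parent x) < rank x"
begin

definition up_step :: "'n \<Rightarrow> 'n \<Rightarrow> bool" where
  "up_step x y \<longleftrightarrow> x \<in> N \<and> x \<noteq> root \<and> y = parent x"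

definition tree_adj :: "'n \<Rightarrow> 'n \<Rightarrow> bool" where
  "tree_adj x y \<longleftrightarrow> up_step x y \<or> up_step y x"

definition tree_walk :: "'n list \<Rightarrow> bool" where
  "tree_walk P \<longleftrightarrow> P \<noteq> [] \<and> set P \<subseteq> N \<and> successively tree_adj P"

text \<open>In a tree the non-backtracking walks are exactly the geodesics.\<close>

definition geodesic :: "'n list \<Rightarrow> bool" where
  "geodesic P \<longleftrightarrow> tree_walk P \<and> no_backtrack P"

lemma up_step_rank: "up_step x y \<Longrightarrow> rank y < rank x"
  using rank_parent_less by (auto simp: up_step_def)

lemma up_step_unique: "up_step x y \<Longrightarrow> up_step x z \<Longrightarrow> y = z"
  by (auto simp: up_step_def)

lemma tree_adj_sym: "tree_adj x y \<Longrightarrow> tree_adj y x"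
  by (auto simp: tree_adj_def)

lemma geodesic_ne: "geodesic P \<Longrightarrow> P \<noteq> []"
  by (simp add: geodesic_def tree_walk_def)

lemma geodesic_in: "geodesic P \<Longrightarrow> x \<in> set P \<Longrightarrow> x \<in> N"
  by (auto simp: geodesic_def tree_walk_def)

lemma geodesic_adj_nth: "geodesic P \<Longrightarrow> Suc i < length P \<Longrightarrow> tree_adj (P ! i) (P ! Suc i)"
  by (simp add: geodesic_def tree_walk_def successively_conv_nth)

lemma geodesic_length_ge_2: "geodesic P \<Longrightarrow> hd P \<noteq> last P \<Longrightarrow> 2 \<le> length P"
  by (cases P) (auto simp: geodesic_def tree_walk_def Suc_le_eq)

text \<open>Once a geodesic steps down, it keeps stepping down: the only upward step from
  a node goes back to its parent.\<close>

lemma geodesic_descends: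
  "geodesic (a # b # r) \<Longrightarrow> up_step b a \<Longrightarrow> successively (\<lambda>x y. up_step y x) (a # b # r)"
proof (induction r arbitrary: a b)
  case (Cons c r)
  have "tree_adj b c" "a \<noteq> c" using Cons.prems by (auto simp: geodesic_def tree_walk_def)
  then have "up_step c b"
    using up_step_unique[OF _ Cons.prems(2)] by (auto simp: tree_adj_def)
  moreover have "geodesic (b # c # r)" using Cons.prems
    by (auto simp: geodesic_def tree_walk_def dest: no_backtrack_tl[of "a # _"])
  ultimately show ?case using Cons by auto
qed simp

lemma successively_down_step_rank:
  "successively (\<lambda>x y. up_step y x) P \<Longrightarrow> 2 \<le> length P \<Longrightarrow> rank (hd P) < rank (last P)"
proof (induction P rule: induct_list012)
  case (3 x y zs)
  then show ?case using up_step_rank by (cases zs) fastforce+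
qed auto

lemma geodesic_rev: "geodesic P \<Longrightarrow> geodesic (rev P)"
  unfolding geodesic_def tree_walk_def using no_backtrack_rev
  by (auto intro: successively_mono tree_adj_sym)

lemma geodesic_first_down_rank:
  assumes "geodesic (a # b # r)" "up_step b a"
  shows "rank a < rank (last (a # b # r))"
  using successively_down_step_rank[OF geodesic_descends[OF assms]] by simp

lemma geodesic_last_up_rank:
  assumes "geodesic (xs @ [y, z])" "up_step y z"
  shows "rank z < rank (hd (xs @ [y, z]))"
proof -
  have "geodesic (z # y # rev xs)" using geodesic_rev[OF assms(1)] by simp
  from geodesic_first_down_rank[OF this assms(2)] show ?thesis
    by (cases xs) (simp_all add: last_rev)
qed

lemma geodesic_appendD1: "geodesic (xs @ ys) \<Longrightarrow> xs \<noteq> [] \<Longrightarrow> geodesic xs"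
  unfolding geodesic_def tree_walk_def using no_backtrack_appendD1
  by (auto simp: successively_append_iff)

lemma geodesic_appendD2: "geodesic (xs @ ys) \<Longrightarrow> ys \<noteq> [] \<Longrightarrow> geodesic ys"
  unfolding geodesic_def tree_walk_def using no_backtrack_appendD2
  by (auto simp: successively_append_iff)

lemma geodesic_take: "geodesic P \<Longrightarrow> 0 < n \<Longrightarrow> geodesic (take n P)"
  using geodesic_appendD1[of "take n P" "drop n P"] by (auto simp: geodesic_def tree_walk_def)

lemma geodesic_drop: "geodesic P \<Longrightarrow> n < length P \<Longrightarrow> geodesic (drop n P)"
  using geodesic_appendD2[of "take n P" "drop n P"] by auto

lemma geodesic_tl: "geodesic P \<Longrightarrow> 2 \<le> length P \<Longrightarrow> geodesic (tl P)"
  using geodesic_drop[of P 1] by (simp add: drop_Suc)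

lemma geodesic_butlast: "geodesic P \<Longrightarrow> 2 \<le> length P \<Longrightarrow> geodesic (butlast P)"
  using geodesic_take[of P "length P - 1"] by (simp add: butlast_conv_take)

lemma geodesic_append:
  assumes "geodesic xs" "geodesic ys" "last xs = hd ys"
    and "2 \<le> length xs \<Longrightarrow> 2 \<le> length ys \<Longrightarrow> xs ! (length xs - 2) \<noteq> ys ! 1"
  shows "geodesic (xs @ tl ys)"
proof -
  obtain xs' y where xs: "xs = xs' @ [y]"
    using geodesic_ne[OF assms(1)] by (metis rev_exhaust)
  obtain ys' where ys: "ys = y # ys'"
    using geodesic_ne[OF assms(2)] assms(3) xs by (metis last_snoc list.collapse)
  have "no_backtrack (xs' @ y # ys')"
  proof (rule no_backtrack_append)
    show "no_backtrack (xs' @ [y])" "no_backtrack (y # ys')"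
      using assms(1,2) xs ys by (simp_all add: geodesic_def)
    assume "xs' \<noteq> []" "ys' \<noteq> []"
    then show "last xs' \<noteq> hd ys'"
      using assms(4) xs ys by (auto simp: nth_append last_conv_nth hd_conv_nth Suc_le_eq)
  qed
  moreover have "tree_walk (xs' @ y # ys')" using assms(1,2) xs ys
    unfolding geodesic_def tree_walk_def by (auto simp: successively_append_iff successively_Cons)
  ultimately show ?thesis using xs ys by (simp add: geodesic_def)
qed

lemma geodesic_first_step_cases:
  assumes "geodesic (a # b # r)"
  shows "up_step a b \<or> rank a < rank (last (a # b # r))"
  using assms geodesic_first_down_rank[OF assms]
  by (auto simp: geodesic_def tree_walk_def tree_adj_def)

lemma geodesic_last_step_cases:
  assumes "geodesic (xs @ [y, z])"
  shows "up_step z y \<or> rank z < rank (hd (xs @ [y, z]))"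
  using assms geodesic_last_up_rank[OF assms]
  by (auto simp: geodesic_def tree_walk_def tree_adj_def successively_append_iff)

lemma geodesic_closed: "geodesic P \<Longrightarrow> hd P = last P \<Longrightarrow> length P = 1"
proof (induction "length P" arbitrary: P rule: less_induct)
  case less
  show ?case
  proof (rule ccontr)
    assume "length P \<noteq> 1"
    then have len: "2 \<le> length P"
      using geodesic_ne[OF less.prems(1)] by (cases P) (auto simp: Suc_le_eq)
    obtain a b r where P: "P = a # b # r" using split_first2[OF len] by blast
    obtain xs y z where P': "P = xs @ [y, z]" using split_last2[OF len] by blast
    have "hd P = a" using P by simp
    have "last P = z" using P' by simp
    then have "z = a" using less.prems(2) \<open>hd P = a\<close> by simp
    have "up_step a b"
      using geodesic_first_step_cases[of a b r] less.prems(1) P \<open>last P = z\<close> \<open>z = a\<close> by auto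
    moreover have "up_step z y"
      using geodesic_last_step_cases[of xs y z] less.prems(1) \<open>hd P = a\<close> \<open>z = a\<close> P' by auto
    ultimately have "y = b" using \<open>z = a\<close> up_step_unique by blast
    have "length P \<noteq> 2"
      using less.prems(2) P up_step_rank[OF \<open>up_step a b\<close>] by (auto simp: length_Suc_conv)
    then have "r \<noteq> []" "xs \<noteq> []" using arg_cong[OF P, of length] arg_cong[OF P', of length]
      by auto
    define M where "M = butlast (tl P)"
    have "geodesic M" unfolding M_def
      using geodesic_butlast[OF geodesic_tl[OF less.prems(1) len]] len \<open>length P \<noteq> 2\<close> by simp
    moreover have "hd M = last M"
    proof -
      have "hd M = b" unfolding M_def using P \<open>r \<noteq> []\<close> by (cases r) auto
      moreover have "M = tl xs @ [y]" unfolding M_def using P' \<open>xs \<noteq> []\<close>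
        by (simp add: butlast_tl butlast_append)
      ultimately show ?thesis using \<open>y = b\<close> by simp
    qed
    moreover have "length M < length P" unfolding M_def using len by simp
    ultimately have "length M = 1" using less.hyps by blast
    then have "length P = 3" using len unfolding M_def by simp
    then have "length r = 1" using P by simp
    then obtain q where "P = [a, b, q]" using P by (auto simp: length_Suc_conv)
    then show False using less.prems by (simp add: geodesic_def)
  qed
qed

lemma geodesics_same_ends_share_step:
  assumes P: "geodesic P" "2 \<le> length P" and P': "geodesic P'" "2 \<le> length P'"
    and ends: "hd P = hd P'" "last P = last P'"
  shows "P ! 1 = P' ! 1 \<or> P ! (length P - 2) = P' ! (length P' - 2)"
proof -
  obtain a b r a' b' r' where first: "P = a # b # r" "P' = a' # b' # r'"
    using split_first2[OF P(2)] split_first2[OF P'(2)] by blast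
  obtain xs y z xs' y' z' where last: "P = xs @ [y, z]" "P' = xs' @ [y', z']"
    using split_last2[OF P(2)] split_last2[OF P'(2)] by blast
  have "a' = a" using ends(1) first by simp
  have "z' = z" using ends(2) last by simp
  show ?thesis
  proof (cases "up_step a b \<and> up_step a' b'")
    case True
    then have "b' = b" using \<open>a' = a\<close> up_step_unique by blast
    then show ?thesis using first by simp
  next
    case False
    then have "rank a < rank (last P)"
      using geodesic_first_step_cases[of a b r] geodesic_first_step_cases[of a' b' r']
        P(1) P'(1) ends(2) first \<open>a' = a\<close> by auto
    moreover have "last P = z" "last P' = z" using last \<open>z' = z\<close> by simp_all
    moreover have "hd P = a" "hd P' = a" using first \<open>a' = a\<close> by simp_all
    ultimately have "up_step z y" "up_step z y'"
      using geodesic_last_step_cases[of xs y z] geodesic_last_step_cases[of xs' y' z']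
        P(1) P'(1) last by auto
    then have "y' = y" using up_step_unique by blast
    then show ?thesis using last by (simp add: nth_append)
  qed
qed

lemma geodesic_unique:
  "geodesic P \<Longrightarrow> geodesic P' \<Longrightarrow> hd P = hd P' \<Longrightarrow> last P = last P' \<Longrightarrow> P = P'"
proof (induction "length P + length P'" arbitrary: P P' rule: less_induct)
  case less
  show ?case
  proof (cases "length P = 1 \<or> length P' = 1")
    case True
    then have "hd P = last P \<or> hd P' = last P'" by (auto simp: length_Suc_conv)
    then have "hd P = last P" "hd P' = last P'" using less.prems(3,4) by auto
    then have "length P = 1" "length P' = 1" using geodesic_closed less.prems(1,2) by blast+
    then obtain x x' where "P = [x]" "P' = [x']" by (auto simp: length_Suc_conv)
    then show ?thesis using less.prems(3) by simp
  next
    case False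
    then have l: "2 \<le> length P" "2 \<le> length P'"
      using geodesic_ne[OF less.prems(1)] geodesic_ne[OF less.prems(2)]
      by (auto simp: Suc_le_eq neq_Nil_conv)
    obtain a b r a' b' r' where first: "P = a # b # r" "P' = a' # b' # r'"
      using split_first2[OF l(1)] split_first2[OF l(2)] by blast
    obtain xs y z xs' y' z' where last: "P = xs @ [y, z]" "P' = xs' @ [y', z']"
      using split_last2[OF l(1)] split_last2[OF l(2)] by blast
    from geodesics_same_ends_share_step[OF less.prems(1) l(1) less.prems(2) l(2) less.prems(3,4)]
    show ?thesis
    proof
      assume "P ! 1 = P' ! 1"
      have "tl P = tl P'"
      proof (rule less.hyps)
        show "length (tl P) + length (tl P') < length P + length P'" using l by simp
        show "geodesic (tl P)" "geodesic (tl P')" using geodesic_tl less.prems(1,2) l by auto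
        show "hd (tl P) = hd (tl P')" "last (tl P) = last (tl P')"
          using \<open>P ! 1 = P' ! 1\<close> less.prems(4) first by auto
      qed
      then show ?thesis using less.prems(3) first by simp
    next
      assume "P ! (length P - 2) = P' ! (length P' - 2)"
      have "butlast P = butlast P'"
      proof (rule less.hyps)
        show "length (butlast P) + length (butlast P') < length P + length P'" using l by simp
        show "geodesic (butlast P)" "geodesic (butlast P')"
          using geodesic_butlast less.prems(1,2) l by auto
        show "hd (butlast P) = hd (butlast P')" using less.prems(3) first by simp
        show "last (butlast P) = last (butlast P')"
          using \<open>P ! (length P - 2) = P' ! (length P' - 2)\<close> last by (simp add: nth_append butlast_append)
      qed
      then show ?thesis
        using append_butlast_last_id[OF geodesic_ne[OF less.prems(1)]]
          append_butlast_last_id[OF geodesic_ne[OF less.prems(2)]] less.prems(4) by metis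
    qed
  qed
qed

lemma tree_walk_shorten:
  "tree_walk P \<Longrightarrow> \<exists>R. geodesic R \<and> hd R = hd P \<and> last R = last P \<and> set R \<subseteq> set P
     \<and> length (filter Q R) \<le> length (filter Q P)"
proof (induction P rule: induct_list012)
  case 1
  then show ?case by (simp add: tree_walk_def)
next
  case (2 a)
  then show ?case by (intro exI[of _ "[a]"]) (simp add: geodesic_def)
next
  case (3 a b rest)
  have tw: "tree_walk (b # rest)" and ab: "tree_adj a b" and aN: "a \<in> N"
    using "3.prems" by (auto simp: tree_walk_def)
  obtain R where R: "geodesic R" "hd R = b" "last R = last (b # rest)" "set R \<subseteq> set (b # rest)"
    "length (filter Q R) \<le> length (filter Q (b # rest))"
    using "3.IH"(2)[OF tw] by auto
  obtain R0 where R0: "R = b # R0" using geodesic_ne[OF R(1)] R(2) by (cases R) auto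
  show ?case
  proof (cases "R0 = [] \<or> hd R0 \<noteq> a")
    case True
    then have "geodesic (a # R)" using R(1) R0 ab aN tw
      by (cases R0) (auto simp: geodesic_def tree_walk_def)
    then show ?thesis using R R0 by (intro exI[of _ "a # R"]) (auto simp: last.simps)
  next
    case False
    then obtain R1 where R1: "R0 = a # R1" by (cases R0) auto
    then have "geodesic (tl R)" using geodesic_tl[OF R(1)] R0 by simp
    moreover have "length (filter Q (tl R)) \<le> length (filter Q (a # b # rest))"
      using R(5) R0 R1 by (cases "Q a"; cases "Q b") auto
    ultimately show ?thesis using R R0 R1 by (intro exI[of _ "tl R"]) auto
  qed
qed

lemma geodesic_distinct: "geodesic P \<Longrightarrow> distinct P"
proof -
  assume P: "geodesic P"
  have "P ! i \<noteq> P ! j" if ij: "i < j" "j < length P" for i j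
  proof
    assume e: "P ! i = P ! j"
    define S where "S = drop i (take (Suc j) P)"
    have "geodesic S" unfolding S_def using ij geodesic_take[OF P] by (intro geodesic_drop) auto
    moreover have "hd S = last S" unfolding S_def using ij e
      by (simp add: hd_drop_conv_nth take_Suc_conv_app_nth)
    ultimately have "length S = 1" using geodesic_closed by blast
    then show False unfolding S_def using ij by simp
  qed
  then show ?thesis unfolding distinct_conv_nth by (metis linorder_neqE_nat)
qed

lemma tree_walk_append: "tree_walk xs \<Longrightarrow> tree_walk ys \<Longrightarrow> last xs = hd ys \<Longrightarrow> tree_walk (xs @ tl ys)"
  unfolding tree_walk_def by (cases ys) (auto simp: successively_append_iff successively_Cons)

lemma tree_walk_rev: "tree_walk P \<Longrightarrow> tree_walk (rev P)"
  unfolding tree_walk_def by (auto intro: successively_mono tree_adj_sym)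

definition subtree :: "'n set \<Rightarrow> 'n \<Rightarrow> bool" where
  "subtree S t \<longleftrightarrow> t \<in> S \<and> S \<subseteq> N \<and> (\<forall>x\<in>S. x \<noteq> t \<longrightarrow> x \<noteq> root \<and> parent x \<in> S)"

lemma subtree_tree_walk_to_top:
  "subtree S t \<Longrightarrow> x \<in> S \<Longrightarrow> \<exists>P. tree_walk P \<and> hd P = x \<and> last P = t \<and> set P \<subseteq> S"
proof (induction "rank x" arbitrary: x rule: less_induct)
  case less
  show ?case
  proof (cases "x = t")
    case True
    then show ?thesis using less.prems
      by (intro exI[of _ "[t]"]) (auto simp: tree_walk_def subtree_def)
  next
    case False
    then have x: "x \<noteq> root" "parent x \<in> S" "x \<in> N" using less.prems by (auto simp: subtree_def)
    then obtain P where P: "tree_walk P" "hd P = parent x" "last P = t" "set P \<subseteq> S"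
      using less.hyps less.prems(1) rank_parent_less by blast
    have "tree_walk (x # P)" using P x
      by (cases P) (auto simp: tree_walk_def tree_adj_def up_step_def)
    then show ?thesis using P less.prems by (intro exI[of _ "x # P"]) (auto simp: tree_walk_def)
  qed
qed

lemma subtree_geodesic:
  assumes "subtree S t" "x \<in> S" "y \<in> S"
  shows "\<exists>P. geodesic P \<and> hd P = x \<and> last P = y \<and> set P \<subseteq> S"
proof -
  obtain P1 where P1: "tree_walk P1" "hd P1 = x" "last P1 = t" "set P1 \<subseteq> S"
    using subtree_tree_walk_to_top assms by blast
  obtain P2 where P2: "tree_walk P2" "hd P2 = y" "last P2 = t" "set P2 \<subseteq> S"
    using subtree_tree_walk_to_top assms by blast
  have ne: "P1 \<noteq> []" "P2 \<noteq> []" using P1 P2 by (auto simp: tree_walk_def)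
  define W where "W = P1 @ tl (rev P2)"
  have "tree_walk W" unfolding W_def
    using tree_walk_append[OF P1(1) tree_walk_rev[OF P2(1)]] P1 P2 ne by (simp add: hd_rev)
  moreover have "hd W = x" "last W = y" unfolding W_def
    using P1 P2 ne last_append_tl[of P1 "rev P2"] by (simp_all add: hd_rev last_rev)
  moreover have "set W \<subseteq> S" unfolding W_def
    using P1 P2 by (auto simp: tl_rev dest: in_set_butlastD)
  ultimately show ?thesis using tree_walk_shorten[of W] by fastforce
qed

lemma subtree_N: "subtree N root"
  using root_in parent_in by (auto simp: subtree_def)

lemma geodesic_exists: "x \<in> N \<Longrightarrow> y \<in> N \<Longrightarrow> \<exists>P. geodesic P \<and> hd P = x \<and> last P = y"
  using subtree_geodesic[OF subtree_N] by blast

lemma subtree_convex: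
  assumes "subtree S t" "geodesic P" "hd P \<in> S" "last P \<in> S"
  shows "set P \<subseteq> S"
proof -
  obtain Q where "geodesic Q" "hd Q = hd P" "last Q = last P" "set Q \<subseteq> S"
    using subtree_geodesic[OF assms(1,3,4)] by blast
  moreover from this have "P = Q" using geodesic_unique[OF assms(2)] by simp
  ultimately show ?thesis by simp
qed

text \<open>Subtrees are convex, so a geodesic that leaves one never returns to it.\<close>

lemma geodesic_leaves_subtree:
  assumes "subtree S t" "geodesic P" "hd P \<in> S" "2 \<le> length P" "P ! 1 \<notin> S"
  shows "\<forall>x \<in> set (tl P). x \<notin> S"
proof
  fix x assume "x \<in> set (tl P)"
  then obtain j where j: "1 \<le> j" "j < length P" "x = P ! j" by (auto simp: in_set_tl_conv_nth)
  show "x \<notin> S"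
  proof
    assume "x \<in> S"
    have "geodesic (take (Suc j) P)" using geodesic_take assms(2) by blast
    moreover have "hd (take (Suc j) P) = hd P" by (simp add: hd_take)
    moreover have "last (take (Suc j) P) = x" using j by (simp add: take_Suc_conv_app_nth)
    ultimately have "set (take (Suc j) P) \<subseteq> S"
      using subtree_convex[OF assms(1)] assms(3) \<open>x \<in> S\<close> by simp
    moreover have "take (Suc j) P ! 1 \<in> set (take (Suc j) P)"
      using j by (intro nth_mem) simp
    then have "P ! 1 \<in> set (take (Suc j) P)" using j by simp
    ultimately show False using assms(5) by auto
  qed
qed

lemma geodesic_enters_subtree:
  assumes "subtree S t" "geodesic P" "last P \<in> S" "2 \<le> length P" "P ! (length P - 2) \<notin> S"
  shows "\<forall>x \<in> set (butlast P). x \<notin> S"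
proof -
  have "rev P ! 1 = P ! (length P - 2)" using assms(4) by (simp add: rev_nth numeral_2_eq_2)
  then have "\<forall>x \<in> set (tl (rev P)). x \<notin> S"
    using geodesic_leaves_subtree[OF assms(1) geodesic_rev[OF assms(2)]] assms by (simp add: hd_rev)
  then show ?thesis by (simp add: tl_rev)
qed

definition bridge :: "'n set \<Rightarrow> 'n set \<Rightarrow> 'n list \<Rightarrow> bool" where
  "bridge A B P \<longleftrightarrow> geodesic P \<and> hd P \<in> A \<and> last P \<in> B \<and> (\<forall>x\<in>set (tl P). x \<notin> A)
     \<and> (\<forall>x\<in>set (butlast P). x \<notin> B)"

lemma bridge_length: "bridge A B P \<Longrightarrow> A \<inter> B = {} \<Longrightarrow> 2 \<le> length P"
  unfolding bridge_def geodesic_def tree_walk_def by (cases P) (auto simp: Suc_le_eq)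

lemma bridge_rev: "bridge A B P \<Longrightarrow> bridge B A (rev P)"
  unfolding bridge_def using geodesic_rev by (auto simp: hd_rev last_rev tl_rev)

lemma bridge_second_notin:
  assumes "bridge A B P" "2 \<le> length P"
  shows "P ! 1 \<notin> A"
proof -
  have "P ! 1 \<in> set (tl P)"
    unfolding in_set_tl_conv_nth using assms(2) by (intro exI[of _ 1]) auto
  then show ?thesis using assms(1) by (auto simp: bridge_def)
qed

lemma bridge_penultimate_notin:
  assumes "bridge A B P" "2 \<le> length P"
  shows "P ! (length P - 2) \<notin> B"
proof -
  have "P ! (length P - 2) \<in> set (butlast P)"
    unfolding in_set_butlast_conv_nth using assms(2) by (intro exI[of _ "length P - 2"]) auto
  then show ?thesis using assms(1) by (auto simp: bridge_def)
qed

lemma bridge_iff_ends: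
  assumes "subtree A ta" "subtree B tb" "geodesic P" "2 \<le> length P"
  shows "bridge A B P \<longleftrightarrow> hd P \<in> A \<and> last P \<in> B \<and> P ! 1 \<notin> A \<and> P ! (length P - 2) \<notin> B"
  using bridge_second_notin bridge_penultimate_notin geodesic_leaves_subtree[OF assms(1,3)]
    geodesic_enters_subtree[OF assms(2,3)] assms(3,4) by (auto simp: bridge_def)

lemma bridge_from_geodesic: "geodesic P \<Longrightarrow> hd P \<in> A \<Longrightarrow> last P \<in> B \<Longrightarrow> \<exists>P'. bridge A B P'"
proof (induction "length P" arbitrary: P rule: less_induct)
  case less
  show ?case
  proof (cases "\<exists>x\<in>set (tl P). x \<in> A")
    case True
    then obtain j where j: "1 \<le> j" "j < length P" "P ! j \<in> A" by (auto simp: in_set_tl_conv_nth)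
    have "geodesic (drop j P)" using geodesic_drop less.prems(1) j by blast
    moreover have "hd (drop j P) \<in> A" using j by (simp add: hd_drop_conv_nth)
    moreover have "last (drop j P) \<in> B" using j less.prems(3) by simp
    moreover have "length (drop j P) < length P" using j by simp
    ultimately show ?thesis using less.hyps by blast
  next
    case notA: False
    show ?thesis
    proof (cases "\<exists>x\<in>set (butlast P). x \<in> B")
      case True
      then obtain j where j: "j < length P - 1" "P ! j \<in> B"
        by (auto simp: in_set_conv_nth nth_butlast)
      have "geodesic (take (Suc j) P)" using geodesic_take less.prems(1) by blast
      moreover have "hd (take (Suc j) P) \<in> A" using less.prems(2) by (simp add: hd_take)
      moreover have "last (take (Suc j) P) \<in> B" using j by (simp add: take_Suc_conv_app_nth)
      moreover have "length (take (Suc j) P) < length P" using j by simp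
      ultimately show ?thesis using less.hyps by blast
    next
      case False
      then show ?thesis using notA less.prems by (auto simp: bridge_def)
    qed
  qed
qed

lemma bridge_exists: "subtree A ta \<Longrightarrow> subtree B tb \<Longrightarrow> \<exists>P. bridge A B P"
  using geodesic_exists bridge_from_geodesic by (metis subtree_def subsetD)

lemma bridge_extend_in_target:
  assumes P: "bridge A B P" "2 \<le> length P" and B: "subtree B tb" and h: "h \<in> B"
  obtains W where "geodesic W" "hd W = hd P" "W ! 1 = P ! 1" "2 \<le> length W" "last W = h"
proof -
  have "last P \<in> B" using P(1) by (simp add: bridge_def)
  then obtain H where H: "geodesic H" "hd H = last P" "last H = h" "set H \<subseteq> B"
    using subtree_geodesic[OF B _ h] by blast
  have "geodesic (P @ tl H)"
  proof (rule geodesic_append)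
    show "geodesic P" using P(1) by (simp add: bridge_def)
    assume "2 \<le> length H"
    then have "H ! 1 \<in> B" using H(4) nth_mem[of 1 H] by auto
    then show "P ! (length P - 2) \<noteq> H ! 1" using bridge_penultimate_notin[OF P] by auto
  qed (use H in auto)
  moreover have "P \<noteq> []" using P(2) by auto
  then have "hd (P @ tl H) = hd P" "(P @ tl H) ! 1 = P ! 1" "2 \<le> length (P @ tl H)"
    using P(2) by (simp_all add: nth_append)
  moreover have "last (P @ tl H) = h" using last_append_tl[of P H] H geodesic_ne[OF H(1)] by simp
  ultimately show ?thesis using that by blast
qed

text \<open>Any bridge extends, through \<open>A\<close> and \<open>B\<close>, to the geodesic between given nodes of
  \<open>A\<close> and \<open>B\<close>; so all bridges leave \<open>A\<close> from the same node.\<close>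

lemma bridge_hd_unique:
  assumes A: "subtree A ta" and B: "subtree B tb" and "A \<inter> B = {}"
    and P: "bridge A B P" and P': "bridge A B P'"
  shows "hd P' = hd P"
proof (rule ccontr)
  assume hd_ne: "hd P' \<noteq> hd P"
  have lP: "2 \<le> length P" and lP': "2 \<le> length P'" using bridge_length assms by blast+
  obtain HA where HA: "geodesic HA" "hd HA = hd P'" "last HA = hd P" "set HA \<subseteq> A"
    using subtree_geodesic[OF A] P P' by (meson bridge_def)
  have "last P' \<in> B" using P' by (simp add: bridge_def)
  then obtain W where W: "geodesic W" "hd W = hd P" "W ! 1 = P ! 1" "2 \<le> length W" "last W = last P'"
    using bridge_extend_in_target[OF P lP B] by blast
  have "geodesic (HA @ tl W)"
  proof (rule geodesic_append)
    assume "2 \<le> length HA"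
    then have "HA ! (length HA - 2) \<in> A" using HA(4) nth_mem[of "length HA - 2" HA] by auto
    then show "HA ! (length HA - 2) \<noteq> W ! 1" using bridge_second_notin[OF P lP] W(3) by auto
  qed (use HA W in auto)
  moreover have "hd (HA @ tl W) = hd P'" using HA geodesic_ne by simp
  moreover have "last (HA @ tl W) = last P'"
    using last_append_tl[of HA W] HA W geodesic_ne[OF W(1)] by simp
  ultimately have eq: "HA @ tl W = P'" using geodesic_unique P' by (simp add: bridge_def)
  have "length HA \<noteq> 1" using HA hd_ne by (auto simp: length_Suc_conv)
  then have "2 \<le> length HA" using geodesic_ne[OF HA(1)] by (cases HA) (auto simp: Suc_le_eq)
  then have "P' ! 1 \<in> A" using eq[symmetric] HA(4) by (auto simp: nth_append subset_iff)
  then show False using bridge_second_notin[OF P' lP'] by simp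
qed

lemma bridge_unique:
  assumes "subtree A ta" "subtree B tb" "A \<inter> B = {}" "bridge A B P" "bridge A B P'"
  shows "P = P'"
proof -
  have "hd P' = hd P" using bridge_hd_unique assms by blast
  moreover have "hd (rev P') = hd (rev P)"
    using bridge_hd_unique[OF assms(2,1) _ bridge_rev[OF assms(4)] bridge_rev[OF assms(5)]] assms(3)
    by blast
  ultimately show ?thesis using geodesic_unique assms(4,5) by (metis bridge_def hd_rev)
qed

definition geodesic_to :: "'n \<Rightarrow> 'n \<Rightarrow> 'n list" where
  "geodesic_to c f = (THE P. geodesic P \<and> hd P = f \<and> last P = c)"

lemma geodesic_to_eq: "geodesic P \<Longrightarrow> hd P = f \<Longrightarrow> last P = c \<Longrightarrow> geodesic_to c f = P"
  unfolding geodesic_to_def by (rule the_equality) (use geodesic_unique in auto)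

lemma geodesic_to:
  assumes "c \<in> N" "f \<in> N"
  shows "geodesic (geodesic_to c f)" "hd (geodesic_to c f) = f" "last (geodesic_to c f) = c"
proof -
  obtain P where "geodesic P" "hd P = f" "last P = c" using geodesic_exists assms by blast
  with geodesic_to_eq show "geodesic (geodesic_to c f)" "hd (geodesic_to c f) = f"
    "last (geodesic_to c f) = c" by simp_all
qed

text \<open>A subtree has a single gate towards \<open>c\<close>: two of its nodes whose geodesics to \<open>c\<close>
  leave the subtree at once are joined inside it, and that path would continue one of
  these geodesics.\<close>

lemma subtree_gate_unique:
  assumes c: "c \<in> N" and S: "subtree S t" and f: "f \<in> S" and g: "g \<in> S"
    and "2 \<le> length (geodesic_to c f)"
    and f_leaves: "geodesic_to c f ! 1 \<notin> S" and g_leaves: "geodesic_to c g ! 1 \<notin> S"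
  shows "f = g"
proof (rule ccontr)
  assume "f \<noteq> g"
  have fN: "f \<in> N" and gN: "g \<in> N" using S f g by (auto simp: subtree_def)
  obtain K where K: "geodesic K" "hd K = g" "last K = f" "set K \<subseteq> S"
    using subtree_geodesic[OF S g f] by blast
  have lK: "2 \<le> length K" using geodesic_length_ge_2[OF K(1)] K \<open>f \<noteq> g\<close> by simp
  note C = geodesic_to[OF c fN]
  have W: "geodesic (K @ tl (geodesic_to c f))"
  proof (rule geodesic_append)
    have "K ! (length K - 2) \<in> set K" using lK by simp
    then show "K ! (length K - 2) \<noteq> geodesic_to c f ! 1" using K(4) f_leaves by auto
  qed (use K C in auto)
  have "geodesic_to c g = K @ tl (geodesic_to c f)"
  proof (rule geodesic_to_eq[OF W])
    show "hd (K @ tl (geodesic_to c f)) = g" using K geodesic_ne by simp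
    show "last (K @ tl (geodesic_to c f)) = c"
      using last_append_tl[of K "geodesic_to c f"] C K geodesic_ne[OF C(1)] by simp
  qed
  then have "geodesic_to c g ! 1 = K ! 1" using lK by (simp add: nth_append)
  moreover have "K ! 1 \<in> S" using K(4) lK nth_mem[of 1 K] by auto
  ultimately show False using g_leaves by simp
qed

lemma geodesic_to_through:
  assumes c: "c \<in> N" and W: "geodesic W" "2 \<le> length W" "hd W = f"
    and diverge: "W ! 1 \<noteq> geodesic_to c f ! 1"
  shows "geodesic_to c (last W) = rev W @ tl (geodesic_to c f)"
proof -
  have fN: "f \<in> N" using geodesic_in[OF W(1)] W(3) geodesic_ne[OF W(1)] by auto
  note C = geodesic_to[OF c fN]
  have "geodesic (rev W @ tl (geodesic_to c f))"
  proof (rule geodesic_append)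
    show "rev W ! (length (rev W) - 2) \<noteq> geodesic_to c f ! 1"
      using W(2) diverge by (simp add: rev_nth numeral_2_eq_2)
  qed (use geodesic_rev W C geodesic_ne in \<open>auto simp: last_rev\<close>)
  moreover have "hd (rev W @ tl (geodesic_to c f)) = last W"
    using geodesic_ne[OF W(1)] by (simp add: hd_rev)
  moreover have "last (rev W @ tl (geodesic_to c f)) = c"
    using last_append_tl[of "rev W" "geodesic_to c f"] C W(3) geodesic_ne[OF C(1)]
    by (simp add: last_rev)
  ultimately show ?thesis using geodesic_to_eq by blast
qed

lemma geodesic_in_meeting_subtrees:
  assumes B: "subtree B tb" and C: "subtree C tc" and g: "g \<in> B" "g \<in> C"
    and J: "geodesic J" "hd J \<in> B" "last J \<in> C"
  shows "set J \<subseteq> B \<union> C"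
proof -
  obtain H1 where H1: "geodesic H1" "hd H1 = hd J" "last H1 = g" "set H1 \<subseteq> B"
    using subtree_geodesic[OF B J(2) g(1)] by blast
  obtain H2 where H2: "geodesic H2" "hd H2 = g" "last H2 = last J" "set H2 \<subseteq> C"
    using subtree_geodesic[OF C g(2) J(3)] by blast
  have "tree_walk (H1 @ tl H2)"
    using tree_walk_append H1 H2 by (simp add: geodesic_def)
  then obtain R where R: "geodesic R" "hd R = hd (H1 @ tl H2)" "last R = last (H1 @ tl H2)"
    "set R \<subseteq> set (H1 @ tl H2)"
    using tree_walk_shorten[of "H1 @ tl H2" "\<lambda>_. True"] by blast
  have "R = J"
  proof (rule geodesic_unique[OF R(1) J(1)])
    show "hd R = hd J" using R(2) H1 geodesic_ne[OF H1(1)] by simp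
    show "last R = last J" using R(3) last_append_tl[of H1 H2] H1 H2 geodesic_ne[OF H2(1)] by simp
  qed
  moreover have "set (tl H2) \<subseteq> set H2" by (cases H2) auto
  ultimately show ?thesis using R(4) H1(4) H2(4) by auto
qed

lemma geodesic_branch_join:
  assumes "geodesic (as @ x # xs)" "geodesic (as @ y # ys)" "x \<noteq> y" "as \<noteq> []"
  shows "geodesic (rev (x # xs) @ last as # y # ys)"
proof -
  have drop: "drop (length as - 1) (as @ z # zs) = last as # z # zs" for z zs
    using assms(4) by (induction as rule: rev_induct) auto
  have "geodesic (last as # x # xs)" "geodesic (last as # y # ys)"
    using geodesic_drop[OF assms(1), of "length as - 1"] geodesic_drop[OF assms(2), of "length as - 1"]
      drop assms(4) by (simp_all add: Suc_le_eq)
  from geodesic_append[OF geodesic_rev[OF this(1)] this(2)] assms(3)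
  show ?thesis by (simp add: nth_append)
qed

text \<open>The joined geodesic leaves the target subtree of the first bridge at once, since
  its second node is the penultimate node of that bridge.\<close>

lemma branch_join_leaves:
  assumes P: "bridge A B (as @ x # xs)" and B: "subtree B tb" and "as \<noteq> []"
    and J: "geodesic (rev (x # xs) @ last as # ys)"
  shows "\<forall>z\<in>set (tl (rev (x # xs) @ last as # ys)). z \<notin> B"
proof -
  let ?P = "as @ x # xs" and ?J = "rev (x # xs) @ last as # ys"
  have lP: "2 \<le> length ?P" using \<open>as \<noteq> []\<close> by (cases as) auto
  have eq: "rev (x # xs) @ last as # rev (butlast as) = rev ?P"
    using append_butlast_last_id[OF \<open>as \<noteq> []\<close>] by (metis rev.simps(2) rev_append append_assoc
        append_Cons append_Nil)
  have "?J ! 1 = (rev (x # xs) @ last as # rev (butlast as)) ! 1"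
    by (rule nth_one_append_Cons_indep) simp
  also have "\<dots> = rev ?P ! 1" by (simp only: eq)
  also have "\<dots> = ?P ! (length ?P - 2)" by (rule rev_nth_1[OF lP])
  finally have "?J ! 1 \<notin> B" using bridge_penultimate_notin[OF P lP] by simp
  moreover have "hd ?J = last (as @ x # xs)" by (simp add: hd_rev)
  then have "hd ?J \<in> B" using P by (simp add: bridge_def)
  ultimately show ?thesis using geodesic_leaves_subtree[OF B J] by simp
qed

lemma bridge_branch:
  assumes Pu: "bridge A B (as @ x # xs)" and Pw: "bridge A C (as @ y # ys)"
    and B: "subtree B tb" and C: "subtree C tc" and "x \<noteq> y" "as \<noteq> []"
  shows "bridge B C (rev (x # xs) @ last as # y # ys)" "B \<inter> C = {}"
proof -
  let ?J = "rev (x # xs) @ last as # y # ys"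
  have J: "geodesic ?J" and J': "geodesic (rev (y # ys) @ last as # x # xs)"
    using geodesic_branch_join Pu Pw assms(5,6) by (auto simp: bridge_def)
  have revJ: "rev ?J = rev (y # ys) @ last as # x # xs" by simp
  have tlB: "\<forall>z\<in>set (tl ?J). z \<notin> B" using branch_join_leaves[OF Pu B assms(6) J] .
  have "\<forall>z\<in>set (tl (rev ?J)). z \<notin> C"
    using branch_join_leaves[OF Pw C assms(6) J'] unfolding revJ .
  then have butlastC: "\<forall>z\<in>set (butlast ?J). z \<notin> C" by (simp only: tl_rev set_rev)
  have "hd ?J = last (as @ x # xs)" "last ?J = last (as @ y # ys)" by (simp_all add: hd_rev)
  then have ends: "hd ?J \<in> B" "last ?J \<in> C" using Pu Pw by (simp_all add: bridge_def)
  show "bridge B C ?J" using J tlB butlastC ends by (simp add: bridge_def)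
  show "B \<inter> C = {}"
  proof (rule ccontr)
    assume "B \<inter> C \<noteq> {}"
    then obtain g where "g \<in> B" "g \<in> C" by blast
    then have "last as \<in> B \<union> C" using geodesic_in_meeting_subtrees[OF B C _ _ J ends] by auto
    moreover have "last as \<in> set (butlast (as @ x # xs))" "last as \<in> set (butlast (as @ y # ys))"
      using assms(6) by (simp_all add: butlast_append)
    ultimately show False using Pu Pw by (auto simp: bridge_def)
  qed
qed

end

lemma face_in_facet:
  assumes "finite X" "F \<in> X"
  shows "\<exists>G\<in>facets X. F \<subseteq> G"
proof -
  obtain G where "G \<in> X" "F \<subseteq> G" "\<forall>H\<in>X. G \<subseteq> H \<longrightarrow> G = H"
    using finite_has_maximal2[OF assms] by blast
  then show ?thesis unfolding facets_def by blast
qed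

lemma Union_facets:
  assumes "finite X" shows "\<Union>(facets X) = \<Union>X"
proof
  show "\<Union>X \<subseteq> \<Union>(facets X)" using face_in_facet[OF assms] by blast
qed (auto simp: facets_def)

fun interleave :: "'a set list \<Rightarrow> 'a set list" where
  "interleave [] = []"
| "interleave [f] = [f]"
| "interleave (f # g # r) = f # (f \<inter> g) # interleave (g # r)"

lemma length_interleave: "fs \<noteq> [] \<Longrightarrow> length (interleave fs) = 2 * length fs - 1"
  by (induction fs rule: interleave.induct) auto

lemma interleave_ne: "fs \<noteq> [] \<Longrightarrow> interleave fs \<noteq> []"
  by (induction fs rule: interleave.induct) auto

lemma nth_interleave_even: "i < length fs \<Longrightarrow> interleave fs ! (2 * i) = fs ! i"
proof (induction fs arbitrary: i rule: interleave.induct)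
  case (3 f g r)
  then show ?case by (cases i) auto
qed auto

lemma nth_interleave_odd:
  "i + 1 < length fs \<Longrightarrow> interleave fs ! (2 * i + 1) = fs ! i \<inter> fs ! (i + 1)"
proof (induction fs arbitrary: i rule: interleave.induct)
  case (3 f g r)
  then show ?case by (cases i) auto
qed auto

lemma hd_interleave: "fs \<noteq> [] \<Longrightarrow> hd (interleave fs) = hd fs"
  by (induction fs rule: interleave.induct) auto

lemma last_interleave: "fs \<noteq> [] \<Longrightarrow> last (interleave fs) = last fs"
  by (induction fs rule: interleave.induct) (auto simp: interleave_ne)

lemma nat_even_odd_cases:
  fixes j :: nat
  obtains (even) i where "j = 2 * i" | (odd) i where "j = 2 * i + 1"
proof -
  have "\<exists>i. j = 2 * i \<or> j = 2 * i + 1" by presburger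
  then show ?thesis using that by blast
qed

lemma nth_interleave_penultimate:
  assumes "2 \<le> length fs"
  shows "interleave fs ! (length (interleave fs) - 2) = fs ! (length fs - 2) \<inter> fs ! (length fs - 1)"
proof -
  have "fs \<noteq> []" using assms by auto
  then have "length (interleave fs) - 2 = 2 * (length fs - 2) + 1"
    using assms length_interleave[of fs] by simp
  moreover have "length fs - 2 + 1 = length fs - 1" using assms by simp
  ultimately show ?thesis using nth_interleave_odd[of "length fs - 2" fs] assms by simp
qed

section \<open>The facet-ridge tree of a stacked complex\<close>

text \<open>The facet-ridge incidence graph of a stacked complex is a tree. We root it at
  the first facet \<open>F\<^sub>0\<close> of a stacking order: the parent of \<open>F\<^sub>p\<close> (\<open>p \<ge> 1\<close>) is the ridge
  \<open>F\<^sub>p - {v\<^sub>p}\<close>, and the parent of a ridge is the first facet containing it.\<close>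

locale stacked_order =
  fixes X :: "'a set set" and d :: nat and L :: "'a set list"
  assumes pure: "pure X d" and L_ne: "L \<noteq> []" and L_distinct: "distinct L"
    and set_L: "set L = facets X"
    and L_stacking: "\<And>p. 1 \<le> p \<Longrightarrow> p < length L \<Longrightarrow>
        \<exists>v. L ! p - (\<Union>j<p. L ! j) = {v} \<and> (\<exists>j<p. L ! p - {v} \<subseteq> L ! j)"
begin

definition ridges :: "'a set set" where
  "ridges = {r. card r = d \<and> (\<exists>f\<in>facets X. r \<subseteq> f)}"

definition tree_nodes :: "'a set set" where
  "tree_nodes = facets X \<union> ridges"

definition facet_index :: "'a set \<Rightarrow> nat" where
  "facet_index f = (THE i. i < length L \<and> L ! i = f)"

definition new_vertex :: "nat \<Rightarrow> 'a" where
  "new_vertex p = (THE v. L ! p - (\<Union>j<p. L ! j) = {v})"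

definition first_container :: "'a set \<Rightarrow> nat" where
  "first_container r = (LEAST j. j < length L \<and> r \<subseteq> L ! j)"

definition tree_parent :: "'a set \<Rightarrow> 'a set" where
  "tree_parent x = (if x \<in> facets X then x - {new_vertex (facet_index x)} else L ! first_container x)"

definition tree_rank :: "'a set \<Rightarrow> nat" where
  "tree_rank x = (if x \<in> facets X then 2 * facet_index x else 2 * first_container x + 1)"

lemma facet_card: "f \<in> facets X \<Longrightarrow> card f = d + 1"
  using pure by (auto simp: pure_def)

lemma facet_finite: "f \<in> facets X \<Longrightarrow> finite f"
  using facet_card card.infinite by fastforce

lemma nth_L_facet: "p < length L \<Longrightarrow> L ! p \<in> facets X"
  using set_L nth_mem by blast

lemma facet_index: "f \<in> facets X \<Longrightarrow> facet_index f < length L \<and> L ! facet_index f = f"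
proof -
  assume "f \<in> facets X"
  then obtain i where i: "i < length L" "L ! i = f" using set_L by (metis in_set_conv_nth)
  have "facet_index f = i" unfolding facet_index_def
    by (rule the_equality) (use i L_distinct nth_eq_iff_index_eq in auto)
  then show ?thesis using i by simp
qed

lemma facet_index_nth: "p < length L \<Longrightarrow> facet_index (L ! p) = p"
  using facet_index[OF nth_L_facet, of p] nth_eq_iff_index_eq[OF L_distinct, of "facet_index (L ! p)" p]
  by simp

lemma nth_L_ne_first:
  assumes "0 < p" "p < length L"
  shows "L ! p \<noteq> L ! 0"
proof -
  have "0 < length L" using assms by linarith
  then show ?thesis using nth_eq_iff_index_eq[OF L_distinct assms(2)] assms(1) by simp
qed

lemma new_vertex:
  assumes "1 \<le> p" "p < length L"
  shows "L ! p - (\<Union>j<p. L ! j) = {new_vertex p}" "\<exists>j<p. L ! p - {new_vertex p} \<subseteq> L ! j"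
proof -
  obtain v where v: "L ! p - (\<Union>j<p. L ! j) = {v}" "\<exists>j<p. L ! p - {v} \<subseteq> L ! j"
    using L_stacking[OF assms] by blast
  moreover have "new_vertex p = v" unfolding new_vertex_def using v(1) by auto
  ultimately show "L ! p - (\<Union>j<p. L ! j) = {new_vertex p}" "\<exists>j<p. L ! p - {new_vertex p} \<subseteq> L ! j"
    by simp_all
qed

lemma new_vertex_in: "1 \<le> p \<Longrightarrow> p < length L \<Longrightarrow> new_vertex p \<in> L ! p"
  using new_vertex(1) by blast

lemma new_vertex_notin: "1 \<le> p \<Longrightarrow> p < length L \<Longrightarrow> j < p \<Longrightarrow> new_vertex p \<notin> L ! j"
  using new_vertex(1) by blast

lemma ridge_not_facet: "r \<in> ridges \<Longrightarrow> r \<notin> facets X"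
  using facet_card[of r] by (auto simp: ridges_def)

lemma ridge_finite: "r \<in> ridges \<Longrightarrow> finite r"
  using facet_finite finite_subset by (auto simp: ridges_def)

lemma first_container: "r \<in> ridges \<Longrightarrow> first_container r < length L \<and> r \<subseteq> L ! first_container r"
proof -
  assume "r \<in> ridges"
  then obtain f where f: "f \<in> facets X" "r \<subseteq> f" by (auto simp: ridges_def)
  then have "facet_index f < length L \<and> r \<subseteq> L ! facet_index f" using facet_index by simp
  then show ?thesis unfolding first_container_def by (rule LeastI)
qed

lemma first_container_le: "j < length L \<Longrightarrow> r \<subseteq> L ! j \<Longrightarrow> first_container r \<le> j"
  unfolding first_container_def by (rule Least_le) simp

lemma tree_parent_facet:
  assumes f: "f \<in> facets X" "f \<noteq> L ! 0"
  shows "1 \<le> facet_index f" "tree_parent f = f - {new_vertex (facet_index f)}"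
    "tree_parent f \<in> ridges" "first_container (tree_parent f) < facet_index f"
proof -
  let ?p = "facet_index f"
  have p: "?p < length L" "L ! ?p = f" using facet_index[OF f(1)] by auto
  show p1: "1 \<le> ?p" using f(2) p by (cases ?p) auto
  show pf: "tree_parent f = f - {new_vertex ?p}" using f(1) by (simp add: tree_parent_def)
  have "card (f - {new_vertex ?p}) = d"
    using new_vertex_in[OF p1 p(1)] p facet_card[OF f(1)] facet_finite[OF f(1)] by simp
  then show "tree_parent f \<in> ridges" using pf f(1) by (auto simp: ridges_def)
  obtain j where j: "j < ?p" "f - {new_vertex ?p} \<subseteq> L ! j"
    using new_vertex(2)[OF p1 p(1)] p by auto
  then have "first_container (f - {new_vertex ?p}) \<le> j" using p(1) first_container_le by simp
  then show "first_container (tree_parent f) < ?p" using j(1) pf by simp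
qed

lemma tree_parent_ridge: "r \<in> ridges \<Longrightarrow> tree_parent r = L ! first_container r"
  using ridge_not_facet by (simp add: tree_parent_def)

sublocale rooted_tree tree_nodes "L ! 0" tree_parent tree_rank
proof
  show "L ! 0 \<in> tree_nodes" using nth_L_facet L_ne by (simp add: tree_nodes_def)
next
  fix x assume x: "x \<in> tree_nodes" "x \<noteq> L ! 0"
  show "tree_parent x \<in> tree_nodes"
  proof (cases "x \<in> facets X")
    case True
    then show ?thesis using tree_parent_facet(3)[OF True x(2)] by (simp add: tree_nodes_def)
  next
    case False
    then have "x \<in> ridges" using x by (simp add: tree_nodes_def)
    then show ?thesis using tree_parent_ridge first_container nth_L_facet by (simp add: tree_nodes_def)
  qed
  show "tree_rank (tree_parent x) < tree_rank x"
  proof (cases "x \<in> facets X")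
    case True
    then show ?thesis using tree_parent_facet[OF True x(2)] ridge_not_facet by (simp add: tree_rank_def)
  next
    case False
    then have "x \<in> ridges" using x by (simp add: tree_nodes_def)
    then have "tree_parent x \<in> facets X" "facet_index (tree_parent x) = first_container x"
      using tree_parent_ridge first_container nth_L_facet facet_index_nth by auto
    then show ?thesis using False by (simp add: tree_rank_def)
  qed
qed

lemma up_step_cases:
  assumes "up_step x y"
  shows "(x \<in> facets X \<and> y \<in> ridges \<and> y \<subseteq> x) \<or> (x \<in> ridges \<and> y \<in> facets X \<and> x \<subseteq> y)"
proof -
  have x: "x \<in> tree_nodes" "x \<noteq> L ! 0" "y = tree_parent x" using assms by (auto simp: up_step_def)
  show ?thesis
  proof (cases "x \<in> facets X")
    case True
    then show ?thesis using tree_parent_facet(2,3)[OF True x(2)] x(3) by auto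
  next
    case False
    then have "x \<in> ridges" using x by (simp add: tree_nodes_def)
    then show ?thesis using tree_parent_ridge first_container nth_L_facet x(3) by auto
  qed
qed

lemma facet_ridge_up_step:
  assumes f: "f \<in> facets X" and r: "r \<in> ridges" "r \<subseteq> f"
  shows "up_step f r \<or> up_step r f"
proof -
  define p where "p = facet_index f"
  have p: "p < length L" "L ! p = f" using facet_index f p_def by auto
  have "first_container r \<le> p" using first_container_le[OF p(1)] p(2) r(2) by simp
  then consider "first_container r = p" | "first_container r < p" by linarith
  then show ?thesis
  proof cases
    case 1
    then have "tree_parent r = f" using tree_parent_ridge r(1) p by simp
    moreover have "r \<noteq> L ! 0" using r(1) ridge_not_facet nth_L_facet L_ne by auto
    ultimately have "up_step r f" unfolding up_step_def using r(1) by (simp add: tree_nodes_def)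
    then show ?thesis ..
  next
    case 2
    then have f0: "f \<noteq> L ! 0" using nth_L_ne_first[OF _ p(1)] p(2) by simp
    note pf = tree_parent_facet[OF f f0, folded p_def]
    have "new_vertex p \<notin> r" using new_vertex_notin[OF pf(1) p(1) 2] first_container r(1) by blast
    then have "r \<subseteq> tree_parent f" using r(2) pf(2) by auto
    moreover have "card r = card (tree_parent f)" using r(1) pf(3) by (simp add: ridges_def)
    ultimately have "r = tree_parent f" using ridge_finite pf(3) by (simp add: card_subset_eq)
    then have "up_step f r" unfolding up_step_def using f0 f by (simp add: tree_nodes_def)
    then show ?thesis ..
  qed
qed

lemma tree_adj_iff:
  "tree_adj x y \<longleftrightarrow> (x \<in> facets X \<and> y \<in> ridges \<and> y \<subseteq> x) \<or> (y \<in> facets X \<and> x \<in> ridges \<and> x \<subseteq> y)"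
  using up_step_cases facet_ridge_up_step unfolding tree_adj_def by blast

definition star :: "'a \<Rightarrow> 'a set set" where
  "star a = {x \<in> tree_nodes. a \<in> x}"

definition first_holder :: "'a \<Rightarrow> nat" where
  "first_holder a = (LEAST j. j < length L \<and> a \<in> L ! j)"

text \<open>The star of a vertex is a subtree topped by the first facet containing it: no vertex
  is lost when passing to a parent, except the new vertex of a later facet.\<close>

lemma subtree_star:
  assumes "a \<in> \<Union>(facets X)"
  shows "subtree (star a) (L ! first_holder a)"
proof -
  obtain i where "i < length L" "a \<in> L ! i" using assms set_L by (metis UnionE in_set_conv_nth)
  then have "first_holder a < length L \<and> a \<in> L ! first_holder a"
    unfolding first_holder_def by (intro LeastI) simp
  then have fh: "first_holder a < length L" "a \<in> L ! first_holder a" by simp_all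
  have fh_le: "first_holder a \<le> j" if "j < length L" "a \<in> L ! j" for j
    unfolding first_holder_def using that by (simp add: Least_le)
  have "x \<noteq> L ! 0 \<and> tree_parent x \<in> star a" if x: "x \<in> star a" "x \<noteq> L ! first_holder a" for x
  proof (cases "x \<in> facets X")
    case True
    define p where "p = facet_index x"
    have p: "p < length L" "L ! p = x" using facet_index True p_def by auto
    have "first_holder a \<le> p" using fh_le[OF p(1)] x p by (simp add: star_def)
    then have lt: "first_holder a < p" using x(2) p(2) by (cases "first_holder a = p") auto
    then have x0: "x \<noteq> L ! 0" using nth_L_ne_first[OF _ p(1)] p(2) by simp
    note pf = tree_parent_facet[OF True x0, folded p_def]
    have "new_vertex p \<noteq> a" using new_vertex_notin[OF pf(1) p(1) lt] fh by blast
    then show ?thesis using x0 pf x by (auto simp: star_def tree_nodes_def)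
  next
    case False
    then have "x \<in> ridges" using x by (auto simp: star_def tree_nodes_def)
    then have "tree_parent x \<in> facets X" "x \<subseteq> tree_parent x"
      using tree_parent_ridge first_container nth_L_facet by auto
    moreover have "x \<noteq> L ! 0" using False nth_L_facet L_ne by auto
    ultimately show ?thesis using x by (auto simp: star_def tree_nodes_def)
  qed
  then show ?thesis unfolding subtree_def using fh nth_L_facet by (auto simp: star_def tree_nodes_def)
qed

section \<open>Paths between vertices as bridges between stars\<close>

lemma walk_facet: "walk X d fs \<Longrightarrow> i < length fs \<Longrightarrow> fs ! i \<in> facets X"
  by (auto simp: walk_def)

lemma walk_inter_ridge: "walk X d fs \<Longrightarrow> i + 1 < length fs \<Longrightarrow> fs ! i \<inter> fs ! (i + 1) \<in> ridges"
  using walk_facet[of fs i] by (auto simp: walk_def ridges_def)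

lemma walk_consecutive_ne: "walk X d fs \<Longrightarrow> i + 1 < length fs \<Longrightarrow> fs ! i \<noteq> fs ! (i + 1)"
  using walk_inter_ridge[of fs i] ridge_not_facet walk_facet[of fs i] by auto

lemma tree_walk_interleave:
  assumes w: "walk X d fs"
  shows "tree_walk (interleave fs)"
proof -
  have ne: "fs \<noteq> []" using w by (simp add: walk_def)
  have len: "length (interleave fs) = 2 * length fs - 1" using length_interleave ne by blast
  have "interleave fs ! j \<in> tree_nodes" if j: "j < length (interleave fs)" for j
  proof (cases j rule: nat_even_odd_cases)
    case (even i)
    then show ?thesis using j len nth_interleave_even[of i fs] walk_facet[OF w, of i]
      by (simp add: tree_nodes_def)
  next
    case (odd i)
    then show ?thesis using j len nth_interleave_odd[of i fs] walk_inter_ridge[OF w, of i]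
      by (simp add: tree_nodes_def)
  qed
  moreover have "tree_adj (interleave fs ! j) (interleave fs ! Suc j)"
    if j: "Suc j < length (interleave fs)" for j
  proof (cases j rule: nat_even_odd_cases)
    case (even i)
    then have i1: "i + 1 < length fs" using j len by simp
    then show ?thesis
      using even nth_interleave_even[of i fs] nth_interleave_odd[of i fs] tree_adj_iff
        walk_inter_ridge[OF w i1] walk_facet[OF w, of i] by auto
  next
    case (odd i)
    then have i1: "i + 1 < length fs" using j len by simp
    then show ?thesis
      using odd nth_interleave_odd[of i fs] nth_interleave_even[of "i + 1" fs] tree_adj_iff
        walk_inter_ridge[OF w i1] walk_facet[OF w i1] by (auto simp: algebra_simps)
  qed
  ultimately show ?thesis unfolding tree_walk_def
    using interleave_ne[OF ne] by (auto simp: successively_conv_nth in_set_conv_nth)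
qed

lemma geodesic_interleave:
  assumes "path X d fs"
  shows "geodesic (interleave fs)"
proof -
  have w: "walk X d fs" and ds: "distinct (map (\<lambda>i. fs ! i \<inter> fs ! (i + 1)) [0..<length fs - 1])"
    using assms by (auto simp: path_def)
  have len: "length (interleave fs) = 2 * length fs - 1"
    using length_interleave w unfolding walk_def by blast
  have "interleave fs ! j \<noteq> interleave fs ! (j + 2)" if j: "j + 2 < length (interleave fs)" for j
  proof (cases j rule: nat_even_odd_cases)
    case (even i)
    then have "i + 1 < length fs" using j len by simp
    then show ?thesis using even nth_interleave_even[of i fs] nth_interleave_even[of "i + 1" fs]
        walk_consecutive_ne[OF w] by (simp add: algebra_simps)
  next
    case (odd i)
    then have i2: "i + 2 < length fs" using j len by simp
    have inj: "inj_on (\<lambda>i. fs ! i \<inter> fs ! (i + 1)) {0..<length fs - 1}"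
      using ds by (simp add: distinct_map)
    have "fs ! i \<inter> fs ! (i + 1) \<noteq> fs ! (i + 1) \<inter> fs ! (i + 2)"
    proof
      assume "fs ! i \<inter> fs ! (i + 1) = fs ! (i + 1) \<inter> fs ! (i + 2)"
      then have "i = i + 1" using inj_onD[OF inj] i2 by (simp add: numeral_2_eq_2)
      then show False by simp
    qed
    then show ?thesis using odd nth_interleave_odd[of i fs] nth_interleave_odd[of "i + 1" fs] i2
      by (simp add: algebra_simps)
  qed
  then show ?thesis using tree_walk_interleave[OF w]
    by (simp add: geodesic_def no_backtrack_conv_nth)
qed

lemma filter_facets_interleave: "walk X d fs \<Longrightarrow> filter (\<lambda>x. x \<in> facets X) (interleave fs) = fs"
proof (induction fs rule: interleave.induct)
  case (2 f)
  then show ?case by (simp add: walk_def)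
next
  case (3 f g r)
  have "walk X d (g # r)" using "3.prems" by (auto simp: walk_def dest: spec[of _ "Suc _"])
  moreover have "f \<inter> g \<notin> facets X" using walk_inter_ridge[OF "3.prems", of 0] ridge_not_facet by simp
  moreover have "f \<in> facets X" using walk_facet[OF "3.prems", of 0] by simp
  ultimately show ?case using "3.IH" by simp
qed simp

lemma facets_inter_eq_ridge:
  assumes "f \<in> facets X" "g \<in> facets X" "f \<noteq> g" "r \<in> ridges" "r \<subseteq> f" "r \<subseteq> g"
  shows "f \<inter> g = r"
proof -
  have "\<not> f \<subseteq> g"
  proof
    assume "f \<subseteq> g"
    moreover have "card f = card g" using facet_card assms(1,2) by simp
    ultimately show False using card_subset_eq facet_finite[OF assms(2)] assms(3) by blast
  qed
  then have "card (f \<inter> g) < card f" using facet_finite[OF assms(1)] by (intro psubset_card_mono) auto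
  then have "card (f \<inter> g) \<le> card r" using facet_card assms(1,4) by (simp add: ridges_def)
  then show ?thesis using assms(5,6) facet_finite[OF assms(1)] by (intro card_seteq[symmetric]) auto
qed

lemma tree_walk_facet_iff_even:
  assumes "tree_walk P" "hd P \<in> facets X" "j < length P"
  shows "P ! j \<in> facets X \<longleftrightarrow> even j"
  using assms(3)
proof (induction j)
  case 0
  then show ?case using assms by (simp add: hd_conv_nth tree_walk_def)
next
  case (Suc j)
  have "tree_adj (P ! j) (P ! Suc j)"
    using assms(1) Suc.prems by (simp add: tree_walk_def successively_conv_nth)
  then have "P ! j \<in> facets X \<longleftrightarrow> P ! Suc j \<notin> facets X" using tree_adj_iff ridge_not_facet by blast
  then show ?case using Suc by simp
qed

lemma geodesic_odd_node:
  assumes P: "geodesic P" "hd P \<in> facets X" and i: "2 * i + 2 < length P"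
  shows "P ! (2 * i + 1) = P ! (2 * i) \<inter> P ! (2 * i + 2)" "P ! (2 * i + 1) \<in> ridges"
proof -
  have tw: "tree_walk P" using P by (simp add: geodesic_def)
  have facets: "P ! (2 * i) \<in> facets X" "P ! (2 * i + 2) \<in> facets X"
    using tree_walk_facet_iff_even[OF tw P(2)] i by simp_all
  have "P ! (2 * i + 1) \<notin> facets X" "P ! (2 * i + 1) \<in> tree_nodes"
    using tree_walk_facet_iff_even[OF tw P(2)] i tw by (auto simp: tree_walk_def)
  then show r: "P ! (2 * i + 1) \<in> ridges" by (simp add: tree_nodes_def)
  have "tree_adj (P ! (2 * i)) (P ! (2 * i + 1))" "tree_adj (P ! (2 * i + 1)) (P ! (2 * i + 2))"
    using geodesic_adj_nth[OF P(1), of "2 * i"] geodesic_adj_nth[OF P(1), of "2 * i + 1"] i by simp_all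
  then have "P ! (2 * i + 1) \<subseteq> P ! (2 * i)" "P ! (2 * i + 1) \<subseteq> P ! (2 * i + 2)"
    using tree_adj_iff r ridge_not_facet by auto
  moreover have "P ! (2 * i) \<noteq> P ! (2 * i + 2)"
    using geodesic_distinct[OF P(1)] i by (simp add: nth_eq_iff_index_eq)
  ultimately show "P ! (2 * i + 1) = P ! (2 * i) \<inter> P ! (2 * i + 2)"
    using facets_inter_eq_ridge[OF facets _ r] by simp
qed

lemma geodesic_interleave_path:
  assumes P: "geodesic P" and h: "hd P \<in> facets X" and l: "last P \<in> facets X"
  shows "\<exists>fs. interleave fs = P \<and> path X d fs"
proof -
  have tw: "tree_walk P" using P by (simp add: geodesic_def)
  have ne: "P \<noteq> []" using geodesic_ne[OF P] .
  have "even (length P - 1)"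
    using tree_walk_facet_iff_even[OF tw h, of "length P - 1"] l ne by (simp add: last_conv_nth)
  then obtain n where "length P - 1 = 2 * n" by (elim evenE)
  then have n: "length P = 2 * n + 1" using ne by (cases P) auto
  define fs where "fs = map (\<lambda>i. P ! (2 * i)) [0..<n + 1]"
  have lfs: "length fs = n + 1" and fsi: "\<And>i. i < n + 1 \<Longrightarrow> fs ! i = P ! (2 * i)"
    by (simp_all add: fs_def del: upt_Suc)
  have fs_ne: "fs \<noteq> []" using lfs by auto
  have mid: "P ! (2 * i + 1) = fs ! i \<inter> fs ! (i + 1)" "P ! (2 * i + 1) \<in> ridges" if "i < n" for i
    using geodesic_odd_node[OF P h, of i] fsi[of i] fsi[of "i + 1"] that n by (simp_all add: algebra_simps)
  have "interleave fs = P"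
  proof (rule nth_equalityI)
    show "length (interleave fs) = length P" using length_interleave[OF fs_ne] lfs n by simp
    fix j assume "j < length (interleave fs)"
    then have j: "j < 2 * n + 1" using length_interleave[OF fs_ne] lfs by simp
    then show "interleave fs ! j = P ! j"
    proof (cases j rule: nat_even_odd_cases)
      case (even i)
      then show ?thesis using nth_interleave_even[of i fs] lfs fsi j by simp
    next
      case (odd i)
      then show ?thesis using nth_interleave_odd[of i fs] lfs mid j by simp
    qed
  qed
  moreover have "walk X d fs" unfolding walk_def
  proof (intro conjI allI impI)
    show "fs \<noteq> []" "set fs \<subseteq> facets X"
      using lfs fsi tree_walk_facet_iff_even[OF tw h] n by (auto simp: in_set_conv_nth)
    show "card (fs ! i \<inter> fs ! (i + 1)) = d" if "i + 1 < length fs" for i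
      using mid[of i] that lfs by (simp add: ridges_def)
  qed
  moreover have "distinct (map (\<lambda>i. fs ! i \<inter> fs ! (i + 1)) [0..<length fs - 1])"
  proof -
    have "map (\<lambda>i. fs ! i \<inter> fs ! (i + 1)) [0..<length fs - 1] = map (\<lambda>i. P ! (2 * i + 1)) [0..<n]"
      using mid lfs by simp
    moreover have "inj_on (\<lambda>i. P ! (2 * i + 1)) {0..<n}"
      using geodesic_distinct[OF P] n by (auto simp: inj_on_def nth_eq_iff_index_eq)
    ultimately show ?thesis by (simp add: distinct_map)
  qed
  ultimately show ?thesis by (auto simp: path_def)
qed

lemma star_disjoint: "\<not> (\<exists>F\<in>facets X. a \<in> F \<and> b \<in> F) \<Longrightarrow> star a \<inter> star b = {}"
  by (auto simp: star_def tree_nodes_def ridges_def)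

lemma walk_hd_last_facet: "walk X d fs \<Longrightarrow> hd fs \<in> facets X \<and> last fs \<in> facets X"
  by (cases fs) (auto simp: walk_def)

text \<open>The neighbours of a ridge are facets containing it, which lie in every star the
  ridge lies in.\<close>

lemma bridge_star_hd_facet:
  assumes "bridge (star a) B P" "star a \<inter> B = {}"
  shows "hd P \<in> facets X"
proof (rule ccontr)
  assume nf: "hd P \<notin> facets X"
  have l: "2 \<le> length P" using bridge_length assms by blast
  have "tree_adj (P ! 0) (P ! 1)" using geodesic_adj_nth[of P 0] assms(1) l by (simp add: bridge_def)
  moreover have "P ! 0 = hd P" using l by (cases P) auto
  ultimately have "P ! 1 \<in> facets X" "hd P \<subseteq> P ! 1" using tree_adj_iff nf by auto
  moreover have "hd P \<in> star a" using assms(1) by (simp add: bridge_def)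
  ultimately have "P ! 1 \<in> star a" by (auto simp: star_def tree_nodes_def)
  then show False using bridge_second_notin[OF assms(1) l] by simp
qed

lemma bridge_star_last_facet:
  assumes "bridge A (star b) P" "A \<inter> star b = {}"
  shows "last P \<in> facets X"
  using bridge_star_hd_facet[OF bridge_rev[OF assms(1)]] assms(2) by (auto simp: hd_rev)

lemma path_between_iff_bridge:
  assumes apart: "\<not> (\<exists>F\<in>facets X. a \<in> F \<and> b \<in> F)"
    and a: "a \<in> \<Union>(facets X)" and b: "b \<in> \<Union>(facets X)"
  shows "path_between X d {a} fs {b} \<longleftrightarrow> path X d fs \<and> bridge (star a) (star b) (interleave fs)"
proof (cases "path X d fs")
  case True
  then have w: "walk X d fs" by (simp add: path_def)
  then have ne: "fs \<noteq> []" by (simp add: walk_def)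
  define P where "P = interleave fs"
  have P: "geodesic P" "length P = 2 * length fs - 1" "hd P = hd fs" "last P = last fs"
    using geodesic_interleave[OF True] length_interleave[OF ne] hd_interleave[OF ne]
      last_interleave[OF ne] by (simp_all add: P_def)
  have facets: "hd fs \<in> facets X" "last fs \<in> facets X" using walk_hd_last_facet[OF w] by auto
  show ?thesis
  proof (cases "2 \<le> length fs")
    case False
    then have "hd fs = last fs" using ne by (cases fs) (auto simp: Suc_le_eq)
    then have "\<not> path_between X d {a} fs {b}" using apart facets by (auto simp: path_between_def)
    moreover have "\<not> bridge (star a) (star b) P"
      using bridge_length[of "star a" "star b" P] star_disjoint[OF apart] P(2) False by auto
    ultimately show ?thesis by (simp add: P_def)
  next
    case True
    then have lP: "2 \<le> length P" using P(2) by simp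
    have "P ! 1 = fs ! 0 \<inter> fs ! 1" "P ! (length P - 2) = fs ! (length fs - 2) \<inter> fs ! (length fs - 1)"
      using nth_interleave_odd[of 0 fs] nth_interleave_penultimate[of fs] True by (simp_all add: P_def)
    moreover have "P ! 1 \<in> tree_nodes" "P ! (length P - 2) \<in> tree_nodes"
      using geodesic_in[OF P(1)] lP by simp_all
    ultimately have "P ! 1 \<in> star a \<longleftrightarrow> {a} \<subseteq> fs ! 0 \<inter> fs ! 1"
      "P ! (length P - 2) \<in> star b \<longleftrightarrow> {b} \<subseteq> fs ! (length fs - 1) \<inter> fs ! (length fs - 2)"
      by (auto simp: star_def)
    moreover have "hd P \<in> star a \<longleftrightarrow> {a} \<subseteq> hd fs" "last P \<in> star b \<longleftrightarrow> {b} \<subseteq> last fs"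
      using P facets by (auto simp: star_def tree_nodes_def)
    ultimately show ?thesis
      unfolding P_def[symmetric] bridge_iff_ends[OF subtree_star[OF a] subtree_star[OF b] P(1) lP]
      using \<open>path X d fs\<close> True by (simp add: path_between_def)
  qed
qed (simp add: path_between_def)

lemma path_between_ex1:
  assumes apart: "\<not> (\<exists>F\<in>facets X. a \<in> F \<and> b \<in> F)"
    and a: "a \<in> \<Union>(facets X)" and b: "b \<in> \<Union>(facets X)"
  shows "\<exists>!fs. path_between X d {a} fs {b}"
proof -
  note iff = path_between_iff_bridge[OF assms]
  have dj: "star a \<inter> star b = {}" using star_disjoint apart by blast
  obtain P where P: "bridge (star a) (star b) P"
    using bridge_exists[OF subtree_star[OF a] subtree_star[OF b]] by blast
  have "geodesic P" using P by (simp add: bridge_def)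
  moreover have "hd P \<in> facets X" "last P \<in> facets X"
    using bridge_star_hd_facet[OF P dj] bridge_star_last_facet[OF P dj] by simp_all
  ultimately obtain fs where fs: "interleave fs = P" "path X d fs"
    using geodesic_interleave_path by blast
  show ?thesis
  proof
    show "path_between X d {a} fs {b}" using iff fs P by simp
    fix gs assume "path_between X d {a} gs {b}"
    then have gs: "path X d gs" "bridge (star a) (star b) (interleave gs)" using iff by simp_all
    have "gs = filter (\<lambda>x. x \<in> facets X) (interleave gs)"
      using filter_facets_interleave gs(1) unfolding path_def by simp
    also have "interleave gs = interleave fs"
      using bridge_unique[OF subtree_star[OF a] subtree_star[OF b] dj gs(2) P] fs(1) by simp
    also have "filter (\<lambda>x. x \<in> facets X) (interleave fs) = fs"
      using filter_facets_interleave fs(2) unfolding path_def by simp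
    finally show "gs = fs" .
  qed
qed

lemma the_path_between:
  assumes "\<not> (\<exists>F\<in>facets X. a \<in> F \<and> b \<in> F)" "a \<in> \<Union>(facets X)" "b \<in> \<Union>(facets X)"
  shows "path X d (THE fs. path_between X d {a} fs {b})"
    "bridge (star a) (star b) (interleave (THE fs. path_between X d {a} fs {b}))"
  using theI'[OF path_between_ex1[OF assms]]
  unfolding path_between_iff_bridge[OF assms] by simp_all

lemma interleave_interior_facets:
  assumes w: "walk X d fs"
  shows "set (butlast (tl (interleave fs))) \<inter> facets X = {fs ! i | i. 1 \<le> i \<and> i < length fs - 1}"
proof (intro equalityI subsetI)
  have len: "length (interleave fs) = 2 * length fs - 1"
    using w length_interleave unfolding walk_def by blast
  fix x assume "x \<in> set (butlast (tl (interleave fs))) \<inter> facets X"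
  then have "x \<in> set (butlast (tl (interleave fs)))" and x: "x \<in> facets X" by simp_all
  then obtain j where j: "1 \<le> j" "j + 1 < length (interleave fs)" "interleave fs ! j = x"
    using in_set_butlast_tl_conv_nth[of x "interleave fs"] by blast
  show "x \<in> {fs ! i | i. 1 \<le> i \<and> i < length fs - 1}"
  proof (cases j rule: nat_even_odd_cases)
    case (even i)
    then have "x = fs ! i" "1 \<le> i" "i < length fs - 1" using j len nth_interleave_even[of i fs] by auto
    then show ?thesis by (intro CollectI exI[of _ i]) simp
  next
    case (odd i)
    then have "x \<in> ridges" using j len nth_interleave_odd[of i fs] walk_inter_ridge[OF w, of i] by simp
    then show ?thesis using x ridge_not_facet by blast
  qed
next
  have len: "length (interleave fs) = 2 * length fs - 1"
    using w length_interleave unfolding walk_def by blast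
  fix x assume "x \<in> {fs ! i | i. 1 \<le> i \<and> i < length fs - 1}"
  then obtain i where i: "1 \<le> i" "i < length fs - 1" "x = fs ! i" by blast
  then have "interleave fs ! (2 * i) = x" using nth_interleave_even[of i fs] by simp
  then have "x \<in> set (butlast (tl (interleave fs)))"
    unfolding in_set_butlast_tl_conv_nth using i len by (intro exI[of _ "2 * i"]) auto
  then show "x \<in> set (butlast (tl (interleave fs))) \<inter> facets X" using walk_facet[OF w] i by auto
qed

lemma path_interior_disjoint_iff:
  assumes p: "path X d fs" and Q: "Q \<subseteq> facets X"
  shows "(\<forall>i. 1 \<le> i \<and> i < length fs - 1 \<longrightarrow> fs ! i \<notin> Q)
    \<longleftrightarrow> set (butlast (tl (interleave fs))) \<inter> Q = {}"
proof -
  have "walk X d fs" using p by (simp add: path_def)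
  have "set (butlast (tl (interleave fs))) \<inter> Q = (set (butlast (tl (interleave fs))) \<inter> facets X) \<inter> Q"
    using Q by blast
  also have "\<dots> = {fs ! i | i. 1 \<le> i \<and> i < length fs - 1} \<inter> Q"
    unfolding interleave_interior_facets[OF \<open>walk X d fs\<close>] ..
  finally show ?thesis by auto
qed

lemma rel_V_iff_bridge:
  assumes finX: "finite X" and F: "partition_on (facets X) \<F>"
  shows "rel_V X d \<F> a b \<longleftrightarrow> a \<noteq> b \<and> a \<in> \<Union>(facets X) \<and> b \<in> \<Union>(facets X)
    \<and> \<not> (\<exists>G\<in>facets X. a \<in> G \<and> b \<in> G)
    \<and> (\<exists>Q\<in>\<F>. \<exists>P. bridge (star a) (star b) P \<and> hd P \<in> Q \<and> last P \<in> Q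
          \<and> set (butlast (tl P)) \<inter> Q = {})"
proof (cases "a \<noteq> b \<and> a \<in> \<Union>(facets X) \<and> b \<in> \<Union>(facets X) \<and> \<not> (\<exists>G\<in>facets X. a \<in> G \<and> b \<in> G)")
  case False
  then show ?thesis unfolding rel_V_def Union_facets[OF finX] by blast
next
  case True
  then have apart: "\<not> (\<exists>G\<in>facets X. a \<in> G \<and> b \<in> G)" and a: "a \<in> \<Union>(facets X)"
    and b: "b \<in> \<Union>(facets X)" by auto
  define fs where "fs = (THE fs. path_between X d {a} fs {b})"
  have fs: "path X d fs" "bridge (star a) (star b) (interleave fs)"
    using the_path_between[OF apart a b] by (simp_all add: fs_def)
  have ne: "fs \<noteq> []" using fs(1) by (simp add: path_def walk_def)
  have bridge_iff: "bridge (star a) (star b) P \<longleftrightarrow> P = interleave fs" for P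
    using bridge_unique[OF subtree_star[OF a] subtree_star[OF b] star_disjoint[OF apart] _ fs(2)] fs(2)
    by blast
  have part: "(hd fs \<in> Q \<and> last fs \<in> Q \<and> (\<forall>i. 1 \<le> i \<and> i < length fs - 1 \<longrightarrow> fs ! i \<notin> Q))
      \<longleftrightarrow> (\<exists>P. bridge (star a) (star b) P \<and> hd P \<in> Q \<and> last P \<in> Q
          \<and> set (butlast (tl P)) \<inter> Q = {})" if "Q \<in> \<F>" for Q
  proof -
    have "Q \<subseteq> facets X" using F that by (auto simp: partition_on_def)
    then show ?thesis unfolding bridge_iff
      using path_interior_disjoint_iff[OF fs(1)] hd_interleave[OF ne] last_interleave[OF ne] by simp
  qed
  show ?thesis using True part unfolding rel_V_def Let_def fs_def[symmetric] Union_facets[OF finX]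
    by (simp cong: bex_cong)
qed

section \<open>Distance to a ridge\<close>

definition count_facets :: "'a set list \<Rightarrow> nat" where
  "count_facets P = length (filter (\<lambda>x. x \<in> facets X) P)"

lemma count_facets_append: "count_facets (xs @ ys) = count_facets xs + count_facets ys"
  by (simp add: count_facets_def)

lemma count_facets_rev: "count_facets (rev xs) = count_facets xs"
  by (simp add: count_facets_def flip: rev_filter)

lemma count_facets_ge_2:
  assumes "f \<in> set W" "h \<in> set W" "f \<noteq> h" "f \<in> facets X" "h \<in> facets X"
  shows "2 \<le> count_facets W"
proof -
  have "{f, h} \<subseteq> set (filter (\<lambda>x. x \<in> facets X) W)" using assms by auto
  then have "card {f, h} \<le> card (set (filter (\<lambda>x. x \<in> facets X) W))" by (intro card_mono) auto
  then show ?thesis using assms(3) card_length[of "filter (\<lambda>x. x \<in> facets X) W"]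
    by (simp add: count_facets_def)
qed

definition tree_dist :: "'a set \<Rightarrow> 'a set \<Rightarrow> nat" where
  "tree_dist c f = count_facets (geodesic_to c f)"

lemma geodesic_to_ridge:
  assumes "c \<in> ridges" "f \<in> facets X"
  shows "geodesic (geodesic_to c f)" "hd (geodesic_to c f) = f" "last (geodesic_to c f) = c"
    "2 \<le> length (geodesic_to c f)"
proof -
  show "geodesic (geodesic_to c f)" "hd (geodesic_to c f) = f" "last (geodesic_to c f) = c"
    using geodesic_to assms by (auto simp: tree_nodes_def)
  moreover have "f \<noteq> c" using assms ridge_not_facet by blast
  ultimately show "2 \<le> length (geodesic_to c f)" using geodesic_length_ge_2 by simp
qed

lemma tree_dist_le_reaches:
  assumes c: "c \<in> ridges" and r: "reaches X d c f r"
  shows "tree_dist c f \<le> r"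
proof -
  obtain fs where fs: "walk X d fs" "length fs = r" "hd fs = f" "c \<subseteq> last fs"
    using r by (auto simp: reaches_def)
  have ne: "fs \<noteq> []" using fs by (simp add: walk_def)
  have "tree_adj (last (interleave fs)) c"
    using tree_adj_iff walk_hd_last_facet[OF fs(1)] c fs(4) last_interleave[OF ne] by simp
  then have tw: "tree_walk (interleave fs @ [c])"
    using tree_walk_interleave[OF fs(1)] c
    unfolding tree_walk_def by (auto simp: successively_append_iff tree_nodes_def)
  obtain R where R: "geodesic R" "hd R = f" "last R = c"
    "count_facets R \<le> count_facets (interleave fs @ [c])"
    using tree_walk_shorten[OF tw, of "\<lambda>x. x \<in> facets X"] fs(3) hd_interleave[OF ne] interleave_ne[OF ne]
    unfolding count_facets_def by auto
  moreover have "count_facets (interleave fs @ [c]) = r"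
    using filter_facets_interleave[OF fs(1)] fs(2) ridge_not_facet[OF c] by (simp add: count_facets_def)
  ultimately show ?thesis using geodesic_to_eq by (simp add: tree_dist_def)
qed

lemma reaches_tree_dist:
  assumes c: "c \<in> ridges" and f: "f \<in> facets X"
  shows "reaches X d c f (tree_dist c f)"
proof -
  note P = geodesic_to_ridge[OF c f]
  define P' where "P' = butlast (geodesic_to c f)"
  have P'P: "geodesic_to c f = P' @ [c]"
    using append_butlast_last_id[OF geodesic_ne[OF P(1)]] P(3) by (simp add: P'_def)
  obtain a b r where abr: "geodesic_to c f = a # b # r" using split_first2[OF P(4)] by blast
  have P': "geodesic P'" "hd P' = f" "P' \<noteq> []"
    using geodesic_butlast[OF P(1,4)] P(2) abr by (simp_all add: P'_def)
  have "tree_adj (last P') c"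
    using P(1) P'P P'(3) by (auto simp: geodesic_def tree_walk_def successively_append_iff)
  then have lP': "last P' \<in> facets X" "c \<subseteq> last P'" using tree_adj_iff c ridge_not_facet by auto
  obtain fs where fs: "interleave fs = P'" "path X d fs"
    using geodesic_interleave_path[OF P'(1)] P'(2) f lP' by blast
  have w: "walk X d fs" and ne: "fs \<noteq> []" using fs(2) by (auto simp: path_def walk_def)
  have "tree_dist c f = length fs"
    using P'P filter_facets_interleave[OF w] fs(1) ridge_not_facet[OF c]
    by (simp add: tree_dist_def count_facets_def)
  moreover have "hd fs = f" "c \<subseteq> last fs"
    using hd_interleave[OF ne] last_interleave[OF ne] fs(1) P'(2) lP' by simp_all
  ultimately show ?thesis unfolding reaches_def using w ne by (auto simp: Suc_le_eq)
qed

lemma facet_dist_eq_tree_dist: "c \<in> ridges \<Longrightarrow> f \<in> facets X \<Longrightarrow> facet_dist X d c f = tree_dist c f"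
  unfolding facet_dist_def by (rule Least_equality) (use tree_dist_le_reaches reaches_tree_dist in auto)

lemma tree_dist_pos: "c \<in> ridges \<Longrightarrow> f \<in> facets X \<Longrightarrow> 1 \<le> tree_dist c f"
  using reaches_tree_dist by (auto simp: reaches_def)

lemma mem_Vm_iff:
  assumes "c \<in> ridges" "1 \<le> m"
  shows "x \<in> Vm X d c m \<longleftrightarrow> (\<exists>f\<in>facets X. x \<in> f \<and> tree_dist c f \<le> m)"
proof -
  have "f \<in> Xm X d c m \<longleftrightarrow> f \<in> facets X \<and> tree_dist c f \<le> m" for f
    using facet_dist_eq_tree_dist[OF assms(1)] reaches_tree_dist[OF assms(1)] by (auto simp: Xm_def)
  then show ?thesis using assms(2) by (auto simp: Vm_def)
qed

section \<open>Paths out of a boundary vertex\<close>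

lemma boundary_vertex_far:
  assumes c: "c \<in> ridges" and "1 \<le> m" and v: "v \<in> Vm X d c m - Vm X d c (m - 1)"
  shows "\<forall>f\<in>facets X. v \<in> f \<longrightarrow> m \<le> tree_dist c f"
proof (cases "m = 1")
  case True
  then show ?thesis using tree_dist_pos[OF c] by simp
next
  case False
  then have "1 \<le> m - 1" using \<open>1 \<le> m\<close> by simp
  then show ?thesis using v mem_Vm_iff[OF c] by fastforce
qed

text \<open>A bridge from the star of a vertex \<open>v\<close> of \<open>V\<^sub>m - V\<^sub>m\<^sub>-\<^sub>1\<close> towards a vertex \<open>b\<close> of
  \<open>V\<^sub>m\<close> leaves along the geodesic to \<open>c\<close>: otherwise the geodesic from a facet \<open>h \<ni> b\<close> of
  \<open>X\<^sub>m\<close> to \<open>c\<close> would run back through the bridge and pass a facet through \<open>v\<close>, all of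
  which lie outside \<open>X\<^sub>m\<^sub>-\<^sub>1\<close>.\<close>

lemma bridge_follows_geodesic_to:
  assumes c: "c \<in> ridges" "1 \<le> m" and v: "v \<in> Vm X d c m - Vm X d c (m - 1)"
    and b: "b \<in> Vm X d c m" and apart: "\<not> (\<exists>F\<in>facets X. v \<in> F \<and> b \<in> F)"
    and P: "bridge (star v) (star b) P"
  shows "geodesic_to c (hd P) ! 1 = P ! 1"
proof (rule ccontr)
  assume diverge: "geodesic_to c (hd P) ! 1 \<noteq> P ! 1"
  obtain h where h: "h \<in> facets X" "b \<in> h" "tree_dist c h \<le> m" using b mem_Vm_iff[OF c] by blast
  have dj: "star v \<inter> star b = {}" using star_disjoint apart by blast
  have lP: "2 \<le> length P" using bridge_length P dj by blast
  have f1: "hd P \<in> facets X" "v \<in> hd P"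
    using bridge_star_hd_facet[OF P dj] P by (auto simp: bridge_def star_def)
  have "h \<in> star b" using h by (simp add: star_def tree_nodes_def)
  then obtain W where W: "geodesic W" "hd W = hd P" "W ! 1 = P ! 1" "2 \<le> length W" "last W = h"
    using bridge_extend_in_target[OF P lP subtree_star] h by blast
  note C = geodesic_to_ridge[OF c(1) f1(1)]
  have "geodesic_to c h = rev W @ tl (geodesic_to c (hd P))"
    using geodesic_to_through[of c W "hd P"] c W diverge by (simp add: tree_nodes_def)
  then have "tree_dist c h = count_facets W + count_facets (tl (geodesic_to c (hd P)))"
    by (simp add: tree_dist_def count_facets_append count_facets_rev)
  moreover have "tree_dist c (hd P) = 1 + count_facets (tl (geodesic_to c (hd P)))"
    using C f1(1) geodesic_ne[OF C(1)]
    by (cases "geodesic_to c (hd P)") (auto simp: tree_dist_def count_facets_def)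
  moreover have "2 \<le> count_facets W"
  proof (rule count_facets_ge_2)
    show "hd P \<in> set W" "h \<in> set W"
      using W(2,5) hd_in_set[OF geodesic_ne[OF W(1)]] last_in_set[OF geodesic_ne[OF W(1)]] by simp_all
    show "hd P \<noteq> h" using apart f1 h by blast
  qed (use f1 h in auto)
  ultimately show False using boundary_vertex_far[OF c v] f1 h(3) by fastforce
qed

lemma bridges_share_first_step:
  assumes c: "c \<in> ridges" "1 \<le> m" and v: "v \<in> Vm X d c m - Vm X d c (m - 1)"
    and u: "u \<in> Vm X d c m" "\<not> (\<exists>F\<in>facets X. v \<in> F \<and> u \<in> F)" "bridge (star v) (star u) Pu"
    and w: "w \<in> Vm X d c m" "\<not> (\<exists>F\<in>facets X. v \<in> F \<and> w \<in> F)" "bridge (star v) (star w) Pw"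
  shows "take 2 Pu = take 2 Pw"
proof -
  have vF: "v \<in> \<Union>(facets X)" using v mem_Vm_iff[OF c] by blast
  have dju: "star v \<inter> star u = {}" and djw: "star v \<inter> star w = {}"
    using star_disjoint u(2) w(2) by blast+
  have lu: "2 \<le> length Pu" and lw: "2 \<le> length Pw" using bridge_length u(3) w(3) dju djw by blast+
  have second_u: "geodesic_to c (hd Pu) ! 1 = Pu ! 1"
    and second_w: "geodesic_to c (hd Pw) ! 1 = Pw ! 1"
    using bridge_follows_geodesic_to[OF c v] u w by blast+
  have "hd Pu = hd Pw"
  proof (rule subtree_gate_unique[OF _ subtree_star[OF vF]])
    show "c \<in> tree_nodes" using c by (simp add: tree_nodes_def)
    show "hd Pu \<in> star v" "hd Pw \<in> star v" using u(3) w(3) by (simp_all add: bridge_def)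
    show "2 \<le> length (geodesic_to c (hd Pu))"
      using geodesic_to_ridge(4)[OF c(1) bridge_star_hd_facet[OF u(3) dju]] .
    show "geodesic_to c (hd Pu) ! 1 \<notin> star v" "geodesic_to c (hd Pw) ! 1 \<notin> star v"
      using second_u second_w bridge_second_notin u(3) w(3) lu lw by simp_all
  qed
  then show ?thesis using take_2_conv[OF lu] take_2_conv[OF lw] second_u second_w by simp
qed

text \<open>A bridge from any set to the star of \<open>u\<close> ends with a ridge avoiding \<open>u\<close> followed by
  the facet it spans with \<open>u\<close>; so it cannot also be a bridge to the star of another
  vertex.\<close>

lemma bridge_star_target_unique:
  assumes Pu: "bridge A (star u) P" and Pw: "bridge A (star w) P"
    and "A \<inter> star u = {}"
  shows "u = w"
proof -
  have lP: "2 \<le> length P" using bridge_length Pu assms(3) by blast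
  define l where "l = last P"
  define r where "r = P ! (length P - 2)"
  have l: "l \<in> facets X" "u \<in> l" "w \<in> l"
    using bridge_star_last_facet[OF Pu assms(3)] Pu Pw by (auto simp: l_def bridge_def star_def)
  have "tree_adj r l"
    using geodesic_adj_nth[of P "length P - 2"] Pu lP
    by (simp add: r_def l_def bridge_def last_conv_nth numeral_2_eq_2 Suc_diff_Suc geodesic_ne)
  then have r: "r \<in> ridges" "r \<subseteq> l" using tree_adj_iff l(1) ridge_not_facet by auto
  have "r \<in> tree_nodes" using r by (simp add: tree_nodes_def)
  then have "u \<notin> r" "w \<notin> r"
    using bridge_penultimate_notin[OF Pu lP] bridge_penultimate_notin[OF Pw lP]
    by (auto simp: r_def star_def)
  moreover have "card (l - r) = 1"
    using card_Diff_subset[OF ridge_finite[OF r(1)] r(2)] facet_card[OF l(1)] r(1)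
    by (simp add: ridges_def)
  ultimately show ?thesis using l by (metis DiffI card_1_singletonE singletonD)
qed

text \<open>Two bridges out of the star of \<open>v\<close> that share their first step (a facet and the
  ridge after it) and end in a common part \<open>Q\<close> avoided by their interiors: neither can be
  a prefix of the other, so they branch after the first step, and joining them at the
  branch node gives a bridge between the two target stars.\<close>

lemma bridges_common_start:
  assumes Pu: "bridge (star v) (star u) Pu" and Pw: "bridge (star v) (star w) Pw"
    and dju: "star v \<inter> star u = {}" and djw: "star v \<inter> star w = {}"
    and u: "u \<in> \<Union>(facets X)" and w: "w \<in> \<Union>(facets X)" and "u \<noteq> w"
    and start: "take 2 Pu = take 2 Pw"
    and Q: "last Pu \<in> Q" "last Pw \<in> Q"
      "set (butlast (tl Pu)) \<inter> Q = {}" "set (butlast (tl Pw)) \<inter> Q = {}"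
  obtains P where "bridge (star u) (star w) P" "star u \<inter> star w = {}"
    "hd P = last Pu" "last P = last Pw" "set (butlast (tl P)) \<inter> Q = {}"
proof -
  have lu: "2 \<le> length Pu" and lw: "2 \<le> length Pw"
    using bridge_length Pu Pw dju djw by blast+
  consider "prefix Pu Pw" | "strict_prefix Pw Pu" | "Pu \<parallel> Pw" using prefix_cases by blast
  then show ?thesis
  proof cases
    case 1
    moreover have "Pu \<noteq> Pw" using bridge_star_target_unique[OF Pu _ dju] Pw \<open>u \<noteq> w\<close> by auto
    ultimately have "last Pu \<in> set (butlast (tl Pw))"
      using strict_prefix_last_in_interior[OF _ lu] by (simp add: strict_prefix_def)
    then show ?thesis using Q by blast
  next
    case 2
    then have "last Pw \<in> set (butlast (tl Pu))" using strict_prefix_last_in_interior[OF _ lw] by simp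
    then show ?thesis using Q by blast
  next
    case 3
    obtain as x xs y ys where dec: "x \<noteq> y" "Pu = as @ x # xs" "Pw = as @ y # ys"
      and "2 \<le> length as"
      by (rule parallel_decomp_beyond_take[OF 3 start])
    then have "as \<noteq> []" by (cases as) auto
    have Pu': "bridge (star v) (star u) (as @ x # xs)" and Pw': "bridge (star v) (star w) (as @ y # ys)"
      using Pu Pw dec by simp_all
    note branch = bridge_branch[OF Pu' Pw' subtree_star[OF u] subtree_star[OF w] dec(1) \<open>as \<noteq> []\<close>]
    show ?thesis
    proof (rule that[OF branch])
      show "hd (rev (x # xs) @ last as # y # ys) = last Pu" "last (rev (x # xs) @ last as # y # ys) = last Pw"
        using dec by (simp_all add: hd_rev)
      show "set (butlast (tl (rev (x # xs) @ last as # y # ys))) \<inter> Q = {}"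
        using branch_join_interior[OF \<open>2 \<le> length as\<close>, of x xs y ys] Q(3,4) dec by auto
    qed
  qed
qed

lemma rel_V_boundary_trans:
  assumes finX: "finite X" and F: "partition_on (facets X) \<F>" and c: "c \<in> ridges"
    and m: "1 \<le> m" and v: "v \<in> Vm X d c m - Vm X d c (m - 1)"
    and u: "u \<in> Vm X d c m" and w: "w \<in> Vm X d c m" and "u \<noteq> w"
    and vu: "rel_V X d \<F> v u" and vw: "rel_V X d \<F> v w"
  shows "rel_V X d \<F> u w"
proof -
  note iff = rel_V_iff_bridge[OF finX F]
  obtain Qu Pu where Pu: "Qu \<in> \<F>" "bridge (star v) (star u) Pu" "hd Pu \<in> Qu" "last Pu \<in> Qu"
      "set (butlast (tl Pu)) \<inter> Qu = {}"
    and apart_u: "\<not> (\<exists>G\<in>facets X. v \<in> G \<and> u \<in> G)" and uF: "u \<in> \<Union>(facets X)"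
    using vu unfolding iff by blast
  obtain Qw Pw where Pw: "Qw \<in> \<F>" "bridge (star v) (star w) Pw" "hd Pw \<in> Qw" "last Pw \<in> Qw"
      "set (butlast (tl Pw)) \<inter> Qw = {}"
    and apart_w: "\<not> (\<exists>G\<in>facets X. v \<in> G \<and> w \<in> G)" and wF: "w \<in> \<Union>(facets X)"
    using vw unfolding iff by blast
  have dju: "star v \<inter> star u = {}" and djw: "star v \<inter> star w = {}"
    using star_disjoint apart_u apart_w by blast+
  have start: "take 2 Pu = take 2 Pw"
    using bridges_share_first_step[OF c m v u apart_u Pu(2) w apart_w Pw(2)] .
  have "hd Pu = hd Pw" using arg_cong[OF start, of hd] by (simp add: hd_take)
  have "Qu = Qw"
  proof (rule ccontr)
    assume "Qu \<noteq> Qw"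
    then have "Qu \<inter> Qw = {}" using F Pu(1) Pw(1) by (auto simp: partition_on_def disjoint_def)
    moreover have "hd Pw \<in> Qu" using Pu(3) \<open>hd Pu = hd Pw\<close> by simp
    ultimately show False using Pw(3) by blast
  qed
  have Pw': "last Pw \<in> Qu" "set (butlast (tl Pw)) \<inter> Qu = {}" using Pw(4,5) \<open>Qu = Qw\<close> by simp_all
  obtain P where P: "bridge (star u) (star w) P" "star u \<inter> star w = {}"
    "hd P = last Pu" "last P = last Pw" "set (butlast (tl P)) \<inter> Qu = {}"
    by (rule bridges_common_start[OF Pu(2) Pw(2) dju djw uF wF \<open>u \<noteq> w\<close> start Pu(4) Pw'(1) Pu(5) Pw'(2)])
  have "\<not> (\<exists>G\<in>facets X. u \<in> G \<and> w \<in> G)" using P(2) by (auto simp: star_def tree_nodes_def)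
  moreover have "\<exists>Q\<in>\<F>. \<exists>P. bridge (star u) (star w) P \<and> hd P \<in> Q \<and> last P \<in> Q
      \<and> set (butlast (tl P)) \<inter> Q = {}"
    using Pu(1,4) Pw'(1) P by (intro bexI[of _ Qu] exI[of _ P]) simp_all
  ultimately show ?thesis unfolding iff using \<open>u \<noteq> w\<close> uF wF by simp
qed

end

theorem lemma3p3:
  fixes V :: "'a set" and X :: "'a set set" and d :: nat and \<F> :: "'a set set set"
    and c :: "'a set" and m :: nat and u v w :: 'a
  assumes "simplicial_complex V X"
    and "stacked X d"
    and "partition_on (facets X) \<F>"
    and "c \<in> X" and "card c = d"
    and "1 \<le> m"
    and "v \<in> Vm X d c m - Vm X d c (m - 1)"
    and "u \<in> Vm X d c m" and "w \<in> Vm X d c m" and "u \<noteq> w"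
    and "rel_V X d \<F> v u" and "rel_V X d \<F> v w"
  shows "rel_V X d \<F> u w"
proof -
  obtain L where "stacked_order X d L"
    using assms(2) unfolding stacked_def stacked_order_def by blast
  then interpret stacked_order X d L .
  have "finite X"
    using assms(1) finite_subset[of X "Pow V"] by (auto simp: simplicial_complex_def)
  then obtain g where "g \<in> facets X" "c \<subseteq> g" using face_in_facet assms(4) by blast
  then have "c \<in> ridges" using assms(5) by (auto simp: ridges_def)
  with \<open>finite X\<close> show ?thesis using rel_V_boundary_trans assms(3,6-12) by blast
qed

end
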